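(* The equivalence $\sim_{\mathrm{TFL}}$ is decidable on finite systems: there is an algorithm that, given two finite systems $\mathfrak T_1,\mathfrak T_2$, decides whether $\mathfrak T_1\sim_{\mathrm{TFL}}\mathfrak T_2$.
   Context: A system (TSI) is $\mathfrak T=(S,s_0,T,I,\Sigma)$ with states $S$, initial $s_0$, labels $\Sigma$, transitions $T\subseteq S\times\Sigma\times S$, irreflexive symmetric independence $I\subseteq T\times T$ satisfying: with $(s,a,s_1)\prec(s_2,a,q)$ iff $\exists b$: $(s,a,s_1)I(s,b,s_2)$, $(s,a,s_1)I(s_1,b,q)$, $(s,b,s_2)I(s_2,a,q)$ and $\sim$ its equivalence closure, (A1) $(s,a,s_1)\sim(s,a,s_2)\Rightarrow s_1=s_2$; (A2) $(s,a,s_1)I(s,b,s_2)\Rightarrow\exists q.\,(s,a,s_1)I(s_1,b,q)\wedge(s,b,s_2)I(s_2,a,q)$; (A3) $(s,a,s_1)I(s_1,b,q)\Rightarrow\exists s_2.\,(s,a,s_1)I(s,b,s_2)\wedge(s,b,s_2)I(s_2,a,q)$; (A4) $t\sim t'\Rightarrow\{u:tIu\}=\{u:t'Iu\}$. Finite means $S$ and $T$ finite. For $t=(s,a,s')$: $\sigma(t)=s,\tau(t)=s',\delta(t)=a$. Relations: $t\otimes t'$ iff $\sigma(t)=\sigma(t')\wedge tIt'$; $t\ominus t'$ iff $\tau(t)=\sigma(t')\wedge tIt'$; $t\le t'$ iff $\tau(t)=\sigma(t')\wedge\neg tIt'$. Processes: $\mathfrak X(s)$ = transitions with source $s$; conflict-free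 set = set with common source, pairwise $\otimes$; support sets = the $\mathfrak X(s)$ and non-empty conflict-free sets; $M\sqsubseteq R$ iff $M\subseteq R$ and no $t\in R\setminus M$ has $t\otimes t'$ for all $t'\in M$; $\mathcal X$ = all $\mathfrak X(s)$ and all support sets $M\sqsubseteq\mathfrak X(s)$; $\mathfrak A=T\cup\{t_\epsilon\}$ with fresh $t_\epsilon$, $\tau(t_\epsilon)=s_0$, $t_\epsilon\le t$ whenever $\sigma(t)=s_0$, never $t_\epsilon\ominus t$; $\mathfrak S=\mathcal X\times\mathfrak A$, initial process $(\mathfrak X(s_0),t_\epsilon)$. $\mathfrak T_1\sim_{\mathrm{TFL}}\mathfrak T_2$ iff the initial processes satisfy the same closed fixpoint-free formulas $\phi::=\mathrm{tt}\mid\neg\phi\mid\phi\wedge\phi\mid\langle a\rangle_c\phi\mid\langle a\rangle_{nc}\phi\mid\langle\otimes\rangle\phi$, where $[\![\langle a\rangle_c\phi]\!]=\{(R,t):\exists r\in R.\ \delta(r)=a,\ t\le r,\ (\mathfrak X(\tau(r)),r)\in[\![\phi]\!]\}$, $\langle a\rangle_{nc}$ likewise with $t\ominus r$, $[\![\langle\otimes\rangle\phi]\!]=\{(R,t):\exists M\in\mathcal X.\ M\sqsubseteq R,\ (M,t)\in[\![\phi]\!]\}$, booleans as usual in $\mathfrak S$. *)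

theory Defs
  imports Main "HOL-Library.Nat_Bijection"
begin

type_synonym trans = "nat \<times> nat \<times> nat"

record tsi =
  St   :: "nat set"
  init :: nat
  Tr   :: "trans set"
  Ind  :: "(trans \<times> trans) set"
  Lab  :: "nat set"

definition src :: "trans \<Rightarrow> nat" where "src t = fst t"
definition lab :: "trans \<Rightarrow> nat" where "lab t = fst (snd t)"
definition tgt :: "trans \<Rightarrow> nat" where "tgt t = snd (snd t)"

definition prec :: "tsi \<Rightarrow> trans \<Rightarrow> trans \<Rightarrow> bool" where
  "prec T t u \<longleftrightarrow> (\<exists>s a s1 s2 q b. t = (s, a, s1) \<and> u = (s2, a, q) \<and>
      ((s, a, s1), (s, b, s2)) \<in> Ind T \<and> ((s, a, s1), (s1, b, q)) \<in> Ind T \<and>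
      ((s, b, s2), (s2, a, q)) \<in> Ind T)"

definition simI :: "tsi \<Rightarrow> trans \<Rightarrow> trans \<Rightarrow> bool" where
  "simI T t u \<longleftrightarrow> (t, u) \<in> ({(x, y). prec T x y} \<union> {(x, y). prec T y x})\<^sup>*"

definition is_tsi :: "tsi \<Rightarrow> bool" where
  "is_tsi T \<longleftrightarrow>
     init T \<in> St T \<and>
     Tr T \<subseteq> St T \<times> Lab T \<times> St T \<and>
     Ind T \<subseteq> Tr T \<times> Tr T \<and>
     irrefl (Ind T) \<and> sym (Ind T) \<and>
     (\<forall>s a s1 s2. simI T (s, a, s1) (s, a, s2) \<longrightarrow> s1 = s2) \<and>
     (\<forall>s a s1 b s2. ((s, a, s1), (s, b, s2)) \<in> Ind T \<longrightarrow>
        (\<exists>q. ((s, a, s1), (s1, b, q)) \<in> Ind T \<and> ((s, b, s2), (s2, a, q)) \<in> Ind T)) \<and>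
     (\<forall>s a s1 b q. ((s, a, s1), (s1, b, q)) \<in> Ind T \<longrightarrow>
        (\<exists>s2. ((s, a, s1), (s, b, s2)) \<in> Ind T \<and> ((s, b, s2), (s2, a, q)) \<in> Ind T)) \<and>
     (\<forall>t t'. simI T t t' \<longrightarrow> {u. (t, u) \<in> Ind T} = {u. (t', u) \<in> Ind T})"

definition finite_tsi :: "tsi \<Rightarrow> bool" where
  "finite_tsi T \<longleftrightarrow> is_tsi T \<and> finite (St T) \<and> finite (Tr T)"

definition otimes :: "tsi \<Rightarrow> trans \<Rightarrow> trans \<Rightarrow> bool" where
  "otimes T t u \<longleftrightarrow> src t = src u \<and> (t, u) \<in> Ind T"

(* the element None of type trans option plays the role of the fresh t_epsilon *)
definition leqA :: "tsi \<Rightarrow> trans option \<Rightarrow> trans \<Rightarrow> bool" where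
  "leqA T t r = (case t of None \<Rightarrow> src r = init T
                 | Some t' \<Rightarrow> tgt t' = src r \<and> (t', r) \<notin> Ind T)"

definition ominusA :: "tsi \<Rightarrow> trans option \<Rightarrow> trans \<Rightarrow> bool" where
  "ominusA T t r = (case t of None \<Rightarrow> False
                   | Some t' \<Rightarrow> tgt t' = src r \<and> (t', r) \<in> Ind T)"

definition Xs :: "tsi \<Rightarrow> nat \<Rightarrow> trans set" where
  "Xs T s = {t \<in> Tr T. src t = s}"

definition conflict_free :: "tsi \<Rightarrow> trans set \<Rightarrow> bool" where
  "conflict_free T M \<longleftrightarrow> M \<subseteq> Tr T \<and> (\<exists>s. \<forall>t\<in>M. src t = s) \<and>
     (\<forall>t\<in>M. \<forall>t'\<in>M. t \<noteq> t' \<longrightarrow> otimes T t t')"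

definition support_set :: "tsi \<Rightarrow> trans set \<Rightarrow> bool" where
  "support_set T M \<longleftrightarrow> (\<exists>s. M = Xs T s) \<or> (M \<noteq> {} \<and> conflict_free T M)"

definition sqsub :: "tsi \<Rightarrow> trans set \<Rightarrow> trans set \<Rightarrow> bool" where
  "sqsub T M R \<longleftrightarrow> M \<subseteq> R \<and> \<not> (\<exists>t\<in>R - M. \<forall>t'\<in>M. otimes T t t')"

definition procsets :: "tsi \<Rightarrow> trans set set" where
  "procsets T = {Xs T s | s. s \<in> St T} \<union>
                {M. support_set T M \<and> (\<exists>s\<in>St T. sqsub T M (Xs T s))}"

datatype form = TT | Neg form | Conj form form
  | DiaC nat form | DiaNC nat form | DiaOt form

fun sat :: "tsi \<Rightarrow> trans set \<times> trans option \<Rightarrow> form \<Rightarrow> bool" where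
  "sat T p TT = True"
| "sat T p (Neg \<phi>) = (\<not> sat T p \<phi>)"
| "sat T p (Conj \<phi> \<psi>) = (sat T p \<phi> \<and> sat T p \<psi>)"
| "sat T (R, t) (DiaC a \<phi>) =
     (\<exists>r\<in>R. lab r = a \<and> leqA T t r \<and> sat T (Xs T (tgt r), Some r) \<phi>)"
| "sat T (R, t) (DiaNC a \<phi>) =
     (\<exists>r\<in>R. lab r = a \<and> ominusA T t r \<and> sat T (Xs T (tgt r), Some r) \<phi>)"
| "sat T (R, t) (DiaOt \<phi>) =
     (\<exists>M\<in>procsets T. sqsub T M R \<and> sat T (M, t) \<phi>)"

definition init_proc :: "tsi \<Rightarrow> trans set \<times> trans option" where
  "init_proc T = (Xs T (init T), None)"

definition tfl_equiv :: "tsi \<Rightarrow> tsi \<Rightarrow> bool" where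
  "tfl_equiv T1 T2 \<longleftrightarrow> (\<forall>\<phi>. sat T1 (init_proc T1) \<phi> = sat T2 (init_proc T2) \<phi>)"

datatype recf = Zero | Succ | Proj nat | Comp recf "recf list"
  | PrimRec recf recf | Minim recf

inductive eval :: "recf \<Rightarrow> nat list \<Rightarrow> nat \<Rightarrow> bool" where
  "eval Zero xs 0"
| "eval Succ (x # xs) (Suc x)"
| "i < length xs \<Longrightarrow> eval (Proj i) xs (xs ! i)"
| "list_all2 (\<lambda>g y. eval g xs y) gs ys \<Longrightarrow> eval f ys z \<Longrightarrow> eval (Comp f gs) xs z"
| "eval f xs y \<Longrightarrow> eval (PrimRec f g) (0 # xs) y"
| "eval (PrimRec f g) (n # xs) y \<Longrightarrow> eval g (n # y # xs) z \<Longrightarrow>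
     eval (PrimRec f g) (Suc n # xs) z"
| "eval f (n # xs) 0 \<Longrightarrow> (\<forall>m<n. \<exists>y. eval f (m # xs) (Suc y)) \<Longrightarrow>
     eval (Minim f) xs n"
monos list_all2_mono

definition enc_trans :: "trans \<Rightarrow> nat" where
  "enc_trans t = prod_encode (src t, prod_encode (lab t, tgt t))"

definition enc_tsi :: "tsi \<Rightarrow> nat" where
  "enc_tsi T = list_encode
     [set_encode (St T), init T, set_encode (enc_trans ` Tr T),
      set_encode ((\<lambda>(t, u). prod_encode (enc_trans t, enc_trans u)) ` Ind T)]"

end

(*
  Processes of finite systems are compared level by level. Two processes agree on all formulas of
  depth at most k + 1 iff they agree up to depth k and satisfy the back-and-forth conditions of
  bisimulation for depth-k agreement: a transition or sub-process without a depth-k partner is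
  separated by a finite conjunction of distinguishing formulas, because it has only finitely many
  candidate partners. On the finite set of pairs of processes these relations form a decreasing
  chain, so it becomes constant after at most as many steps as there are pairs, and
  TFL-equivalence is agreement of the initial processes at that level. Coding finite sets of
  transitions by set_encode, the whole iteration is a bounded primitive recursion on enc_tsi and
  therefore a partial recursive function.
*)

theory Submission
  imports Defs
begin

section \<open>Graded agreement\<close>

type_synonym proc = "trans set \<times> trans option"

fun depth :: "form \<Rightarrow> nat" where
  "depth TT = 0"
| "depth (Neg \<phi>) = depth \<phi>"
| "depth (Conj \<phi> \<psi>) = max (depth \<phi>) (depth \<psi>)"
| "depth (DiaC a \<phi>) = Suc (depth \<phi>)"
| "depth (DiaNC a \<phi>) = Suc (depth \<phi>)"
| "depth (DiaOt \<phi>) = Suc (depth \<phi>)"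

definition agree :: "tsi \<Rightarrow> tsi \<Rightarrow> nat \<Rightarrow> proc \<Rightarrow> proc \<Rightarrow> bool" where
  "agree T1 T2 k p q \<longleftrightarrow> (\<forall>\<phi>. depth \<phi> \<le> k \<longrightarrow> sat T1 p \<phi> = sat T2 q \<phi>)"

lemma agree_sym: "agree T2 T1 k q p \<longleftrightarrow> agree T1 T2 k p q"
  unfolding agree_def by auto

lemma agree_0: "agree T1 T2 0 p q"
proof -
  have "depth \<phi> = 0 \<Longrightarrow> sat T1 p \<phi> = sat T2 q \<phi>" for \<phi>
    by (induction \<phi>) auto
  then show ?thesis unfolding agree_def by simp
qed

lemma agree_Suc_imp_agree: "agree T1 T2 (Suc k) p q \<Longrightarrow> agree T1 T2 k p q"
  unfolding agree_def by auto

lemma tfl_equiv_iff_agree: "tfl_equiv T1 T2 \<longleftrightarrow> (\<forall>k. agree T1 T2 k (init_proc T1) (init_proc T2))"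
  unfolding tfl_equiv_def agree_def by auto

definition diamond :: "nat \<Rightarrow> nat \<Rightarrow> form \<Rightarrow> form" where
  "diamond m a \<psi> = (if m = 0 then DiaC a \<psi> else DiaNC a \<psi>)"

definition step_rel :: "nat \<Rightarrow> tsi \<Rightarrow> trans option \<Rightarrow> trans \<Rightarrow> bool" where
  "step_rel m = (if m = 0 then leqA else ominusA)"

lemma sat_diamond:
  "sat T (R, t) (diamond m a \<psi>) \<longleftrightarrow>
   (\<exists>r\<in>R. lab r = a \<and> step_rel m T t r \<and> sat T (Xs T (tgt r), Some r) \<psi>)"
  by (simp add: diamond_def step_rel_def)

lemma depth_diamond [simp]: "depth (diamond m a \<psi>) = Suc (depth \<psi>)"
  by (simp add: diamond_def)

definition forth_step ::
    "tsi \<Rightarrow> tsi \<Rightarrow> (proc \<Rightarrow> proc \<Rightarrow> bool) \<Rightarrow> nat \<Rightarrow> proc \<Rightarrow> proc \<Rightarrow> bool" where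
  "forth_step T1 T2 A m p q \<longleftrightarrow>
     (\<forall>r\<in>fst p. step_rel m T1 (snd p) r \<longrightarrow>
       (\<exists>r'\<in>fst q. lab r' = lab r \<and> step_rel m T2 (snd q) r' \<and>
          A (Xs T1 (tgt r), Some r) (Xs T2 (tgt r'), Some r')))"

definition forth_sub :: "tsi \<Rightarrow> tsi \<Rightarrow> (proc \<Rightarrow> proc \<Rightarrow> bool) \<Rightarrow> proc \<Rightarrow> proc \<Rightarrow> bool" where
  "forth_sub T1 T2 A p q \<longleftrightarrow>
     (\<forall>M\<in>procsets T1. sqsub T1 M (fst p) \<longrightarrow>
       (\<exists>M'\<in>procsets T2. sqsub T2 M' (fst q) \<and> A (M, snd p) (M', snd q)))"

definition back_and_forth :: "tsi \<Rightarrow> tsi \<Rightarrow> (proc \<Rightarrow> proc \<Rightarrow> bool) \<Rightarrow> proc \<Rightarrow> proc \<Rightarrow> bool" where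
  "back_and_forth T1 T2 A p q \<longleftrightarrow>
     forth_step T1 T2 A 0 p q \<and> forth_step T2 T1 (\<lambda>q p. A p q) 0 q p \<and>
     forth_step T1 T2 A 1 p q \<and> forth_step T2 T1 (\<lambda>q p. A p q) 1 q p \<and>
     forth_sub T1 T2 A p q \<and> forth_sub T2 T1 (\<lambda>q p. A p q) q p"

fun Conjs :: "form list \<Rightarrow> form" where
  "Conjs [] = TT"
| "Conjs (\<phi> # \<phi>s) = Conj \<phi> (Conjs \<phi>s)"

lemma sat_Conjs: "sat T p (Conjs \<phi>s) \<longleftrightarrow> (\<forall>\<phi>\<in>set \<phi>s. sat T p \<phi>)"
  by (induction \<phi>s) auto

lemma depth_Conjs: "\<forall>\<phi>\<in>set \<phi>s. depth \<phi> \<le> k \<Longrightarrow> depth (Conjs \<phi>s) \<le> k"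
  by (induction \<phi>s) auto

lemma distinguishing_formula:
  assumes "finite Q" "\<forall>q\<in>Q. \<not> agree T1 T2 k p q"
  shows "\<exists>\<Psi>. depth \<Psi> \<le> k \<and> sat T1 p \<Psi> \<and> (\<forall>q\<in>Q. \<not> sat T2 q \<Psi>)"
proof -
  have "\<forall>q\<in>Q. \<exists>\<psi>. depth \<psi> \<le> k \<and> sat T1 p \<psi> \<and> \<not> sat T2 q \<psi>"
  proof
    fix q assume "q \<in> Q"
    obtain \<phi> where \<phi>: "depth \<phi> \<le> k" "sat T1 p \<phi> \<noteq> sat T2 q \<phi>"
      using assms(2) \<open>q \<in> Q\<close> unfolding agree_def by blast
    show "\<exists>\<psi>. depth \<psi> \<le> k \<and> sat T1 p \<psi> \<and> \<not> sat T2 q \<psi>"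
    proof (cases "sat T1 p \<phi>")
      case True
      with \<phi> show ?thesis by blast
    next
      case False
      with \<phi> show ?thesis by (intro exI[of _ "Neg \<phi>"]) simp
    qed
  qed
  from bchoice[OF this] obtain \<psi>
    where \<psi>: "\<forall>q\<in>Q. depth (\<psi> q) \<le> k \<and> sat T1 p (\<psi> q) \<and> \<not> sat T2 q (\<psi> q)"
    by blast
  obtain qs where "set qs = Q" using finite_list[OF assms(1)] by blast
  with \<psi> show ?thesis
    by (intro exI[of _ "Conjs (map \<psi> qs)"]) (auto simp: sat_Conjs intro!: depth_Conjs)
qed

lemma procsets_subset_Tr: "M \<in> procsets T \<Longrightarrow> M \<subseteq> Tr T"
  by (auto simp: procsets_def Xs_def sqsub_def)

lemma finite_procsets: "finite_tsi T \<Longrightarrow> finite (procsets T)"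
  by (rule finite_subset[of _ "Pow (Tr T)"]) (auto dest: procsets_subset_Tr simp: finite_tsi_def)

lemma forth_step_if_agree_Suc:
  assumes "finite R2" "agree T1 T2 (Suc k) (R1, t1) (R2, t2)"
  shows "forth_step T1 T2 (agree T1 T2 k) m (R1, t1) (R2, t2)"
  unfolding forth_step_def fst_conv snd_conv
proof (intro ballI impI, rule ccontr)
  fix r assume r: "r \<in> R1" "step_rel m T1 t1 r"
    and no_match: "\<not> (\<exists>r'\<in>R2. lab r' = lab r \<and> step_rel m T2 t2 r' \<and>
      agree T1 T2 k (Xs T1 (tgt r), Some r) (Xs T2 (tgt r'), Some r'))"
  let ?Q = "(\<lambda>r'. (Xs T2 (tgt r'), Some r')) ` {r'\<in>R2. lab r' = lab r \<and> step_rel m T2 t2 r'}"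
  have fin_Q: "finite ?Q" using assms(1) by simp
  have no_agree: "\<forall>q\<in>?Q. \<not> agree T1 T2 k (Xs T1 (tgt r), Some r) q" using no_match by auto
  from distinguishing_formula[OF fin_Q no_agree] obtain \<Psi>
    where \<Psi>: "depth \<Psi> \<le> k" "sat T1 (Xs T1 (tgt r), Some r) \<Psi>" "\<forall>q\<in>?Q. \<not> sat T2 q \<Psi>"
    by blast
  have "sat T1 (R1, t1) (diamond m (lab r) \<Psi>)" using r \<Psi> by (auto simp: sat_diamond)
  moreover have "\<not> sat T2 (R2, t2) (diamond m (lab r) \<Psi>)" using \<Psi> by (auto simp: sat_diamond)
  moreover have "depth (diamond m (lab r) \<Psi>) \<le> Suc k" using \<Psi>(1) by simp
  ultimately show False using assms(2) unfolding agree_def by blast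
qed

lemma forth_sub_if_agree_Suc:
  assumes "finite_tsi T2" "agree T1 T2 (Suc k) (R1, t1) (R2, t2)"
  shows "forth_sub T1 T2 (agree T1 T2 k) (R1, t1) (R2, t2)"
  unfolding forth_sub_def fst_conv snd_conv
proof (intro ballI impI, rule ccontr)
  fix M assume M: "M \<in> procsets T1" "sqsub T1 M R1"
    and no_match: "\<not> (\<exists>M'\<in>procsets T2. sqsub T2 M' R2 \<and> agree T1 T2 k (M, t1) (M', t2))"
  let ?Q = "(\<lambda>M'. (M', t2)) ` {M'\<in>procsets T2. sqsub T2 M' R2}"
  have fin_Q: "finite ?Q" using finite_procsets[OF assms(1)] by simp
  have no_agree: "\<forall>q\<in>?Q. \<not> agree T1 T2 k (M, t1) q" using no_match by auto
  from distinguishing_formula[OF fin_Q no_agree]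
  obtain \<Psi> where \<Psi>: "depth \<Psi> \<le> k" "sat T1 (M, t1) \<Psi>" "\<forall>q\<in>?Q. \<not> sat T2 q \<Psi>"
    by blast
  have "sat T1 (R1, t1) (DiaOt \<Psi>)" using M \<Psi> by auto
  moreover have "\<not> sat T2 (R2, t2) (DiaOt \<Psi>)" using \<Psi> by auto
  moreover have "depth (DiaOt \<Psi>) \<le> Suc k" using \<Psi>(1) by simp
  ultimately show False using assms(2) unfolding agree_def by blast
qed

lemma sat_diamond_transfer:
  assumes "forth_step T1 T2 (agree T1 T2 k) m p q" "depth \<psi> \<le> k" "sat T1 p (diamond m a \<psi>)"
  shows "sat T2 q (diamond m a \<psi>)"
proof -
  obtain R1 t1 R2 t2 where pq: "p = (R1, t1)" "q = (R2, t2)" by fastforce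
  obtain r where r: "r \<in> R1" "lab r = a" "step_rel m T1 t1 r" "sat T1 (Xs T1 (tgt r), Some r) \<psi>"
    using assms(3) by (auto simp: pq sat_diamond)
  then obtain r' where "r' \<in> R2" "lab r' = a" "step_rel m T2 t2 r'"
      "agree T1 T2 k (Xs T1 (tgt r), Some r) (Xs T2 (tgt r'), Some r')"
    using assms(1) unfolding forth_step_def pq by auto
  with r assms(2) show ?thesis unfolding agree_def pq by (auto simp: sat_diamond)
qed

lemma sat_DiaOt_transfer:
  assumes "forth_sub T1 T2 (agree T1 T2 k) p q" "depth \<psi> \<le> k" "sat T1 p (DiaOt \<psi>)"
  shows "sat T2 q (DiaOt \<psi>)"
proof -
  obtain R1 t1 R2 t2 where pq: "p = (R1, t1)" "q = (R2, t2)" by fastforce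
  obtain M where M: "M \<in> procsets T1" "sqsub T1 M R1" "sat T1 (M, t1) \<psi>"
    using assms(3) by (auto simp: pq)
  then obtain M' where "M' \<in> procsets T2" "sqsub T2 M' R2" "agree T1 T2 k (M, t1) (M', t2)"
    using assms(1) unfolding forth_sub_def pq by auto
  with M assms(2) show ?thesis unfolding agree_def pq by auto
qed

lemma agree_Suc_iff:
  assumes "finite_tsi T1" "finite_tsi T2" "fst p \<subseteq> Tr T1" "fst q \<subseteq> Tr T2"
  shows "agree T1 T2 (Suc k) p q \<longleftrightarrow>
    agree T1 T2 k p q \<and> back_and_forth T1 T2 (agree T1 T2 k) p q"
proof -
  have flip: "(\<lambda>q p. agree T1 T2 k p q) = agree T2 T1 k"
    by (intro ext) (simp add: agree_sym)
  obtain R1 t1 R2 t2 where pq: "p = (R1, t1)" "q = (R2, t2)" by fastforce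
  have fin: "finite R1" "finite R2"
    using assms pq by (auto simp: finite_tsi_def intro: finite_subset)
  show ?thesis
  proof
    assume agree_Suc: "agree T1 T2 (Suc k) p q"
    then have agree_Suc': "agree T2 T1 (Suc k) q p" by (simp add: agree_sym)
    show "agree T1 T2 k p q \<and> back_and_forth T1 T2 (agree T1 T2 k) p q"
      unfolding back_and_forth_def flip pq
      using agree_Suc agree_Suc_imp_agree
        forth_step_if_agree_Suc[OF fin(2) agree_Suc[unfolded pq]]
        forth_step_if_agree_Suc[OF fin(1) agree_Suc'[unfolded pq]]
        forth_sub_if_agree_Suc[OF assms(2) agree_Suc[unfolded pq]]
        forth_sub_if_agree_Suc[OF assms(1) agree_Suc'[unfolded pq]]
      by (simp add: pq)
  next
    assume "agree T1 T2 k p q \<and> back_and_forth T1 T2 (agree T1 T2 k) p q"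
    then have forward: "\<And>m. m \<in> {0, 1} \<Longrightarrow> forth_step T1 T2 (agree T1 T2 k) m p q"
        "forth_sub T1 T2 (agree T1 T2 k) p q"
      and backward: "\<And>m. m \<in> {0, 1} \<Longrightarrow> forth_step T2 T1 (agree T2 T1 k) m q p"
        "forth_sub T2 T1 (agree T2 T1 k) q p"
      unfolding back_and_forth_def flip by auto
    have "sat T1 p \<phi> = sat T2 q \<phi>" if "depth \<phi> \<le> Suc k" for \<phi>
      using that
    proof (induction \<phi>)
      case (DiaC a \<psi>)
      then show ?case
        using sat_diamond_transfer[OF forward(1), of 0 \<psi> a]
          sat_diamond_transfer[OF backward(1), of 0 \<psi> a]
        by (auto simp: diamond_def)
    next
      case (DiaNC a \<psi>)
      then show ?case
        using sat_diamond_transfer[OF forward(1), of 1 \<psi> a]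
          sat_diamond_transfer[OF backward(1), of 1 \<psi> a]
        by (auto simp: diamond_def)
    next
      case (DiaOt \<psi>)
      then show ?case
        using sat_DiaOt_transfer[OF forward(2), of \<psi>] sat_DiaOt_transfer[OF backward(2), of \<psi>]
        by auto
    qed auto
    then show "agree T1 T2 (Suc k) p q" unfolding agree_def by blast
  qed
qed

section \<open>Computable functions\<close>

definition computable :: "nat \<Rightarrow> (nat list \<Rightarrow> nat) \<Rightarrow> bool" where
  "computable n g \<longleftrightarrow> (\<exists>f. \<forall>xs. length xs = n \<longrightarrow> eval f xs (g xs))"

definition decidable :: "nat \<Rightarrow> (nat list \<Rightarrow> bool) \<Rightarrow> bool" where
  "decidable n P \<longleftrightarrow> computable n (\<lambda>xs. if P xs then 1 else 0)"

lemma computable_cong: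
  "computable n g \<Longrightarrow> (\<And>xs. length xs = n \<Longrightarrow> g xs = g' xs) \<Longrightarrow> computable n g'"
  unfolding computable_def by metis

lemma computable_comp:
  assumes h: "computable (length gs) h" and gs: "\<forall>g\<in>set gs. computable n g"
  shows "computable n (\<lambda>xs. h (map (\<lambda>g. g xs) gs))"
proof -
  let ?computes = "\<lambda>f g. \<forall>xs. length xs = n \<longrightarrow> eval f xs (g xs)"
  from gs have "\<exists>fs. list_all2 ?computes fs gs"
    unfolding computable_def by (induction gs) (auto intro: list_all2_Cons[THEN iffD2])
  then obtain fs where fs: "list_all2 ?computes fs gs" by blast
  from h obtain fh where fh: "\<forall>ys. length ys = length gs \<longrightarrow> eval fh ys (h ys)"
    unfolding computable_def by blast
  have "eval (Comp fh fs) xs (h (map (\<lambda>g. g xs) gs))" if "length xs = n" for xs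
  proof (rule eval.intros(4))
    show "list_all2 (\<lambda>g y. eval g xs y) fs (map (\<lambda>g. g xs) gs)"
      using fs that by (auto simp: list_all2_conv_all_nth)
  qed (use fh in simp)
  then show ?thesis unfolding computable_def by blast
qed

primrec const_recf :: "nat \<Rightarrow> recf" where
  "const_recf 0 = Zero"
| "const_recf (Suc c) = Comp Succ [const_recf c]"

lemma eval_const_recf: "eval (const_recf c) xs c"
proof (induction c)
  case (Suc c)
  have "list_all2 (\<lambda>g y. eval g xs y) [const_recf c] [c]" using Suc by simp
  then show ?case by (auto intro: eval.intros)
qed (simp add: eval.intros)

lemma computable_const: "computable n (\<lambda>xs. c)"
  unfolding computable_def using eval_const_recf by blast

lemma computable_nth: "j < n \<Longrightarrow> computable n (\<lambda>xs. xs ! j)"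
  unfolding computable_def by (metis eval.intros(3))

lemma computable_Suc_nth: "computable 1 (\<lambda>xs. Suc (xs ! 0))"
  unfolding computable_def
proof (intro exI allI impI)
  fix xs :: "nat list" assume "length xs = 1"
  then obtain x where "xs = [x]" by (cases xs) auto
  then show "eval Succ xs (Suc (xs ! 0))" by (simp add: eval.intros)
qed

lemma computable_prim_rec:
  assumes "computable n b" "computable (Suc (Suc n)) s"
  shows "computable (Suc n) (\<lambda>xs. rec_nat (b (tl xs)) (\<lambda>k acc. s (k # acc # tl xs)) (hd xs))"
proof -
  obtain fb where fb: "\<forall>xs. length xs = n \<longrightarrow> eval fb xs (b xs)"
    using assms(1) unfolding computable_def by blast
  obtain fs where fs: "\<forall>xs. length xs = Suc (Suc n) \<longrightarrow> eval fs xs (s xs)"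
    using assms(2) unfolding computable_def by blast
  have eval_iter: "eval (PrimRec fb fs) (k # ys) (rec_nat (b ys) (\<lambda>k acc. s (k # acc # ys)) k)"
    if "length ys = n" for k ys
    by (induction k) (use fb fs that in \<open>auto intro: eval.intros\<close>)
  show ?thesis unfolding computable_def
  proof (intro exI allI impI)
    fix xs :: "nat list" assume "length xs = Suc n"
    then obtain y ys where "xs = y # ys" "length ys = n" by (cases xs) auto
    then show "eval (PrimRec fb fs) xs (rec_nat (b (tl xs)) (\<lambda>k acc. s (k # acc # tl xs)) (hd xs))"
      using eval_iter by simp
  qed
qed

lemma computable_lift1:
  "computable 1 (\<lambda>ys. F (ys ! 0)) \<Longrightarrow> computable n g1 \<Longrightarrow> computable n (\<lambda>xs. F (g1 xs))"
  using computable_comp[of "[g1]" "\<lambda>ys. F (ys ! 0)" n] by simp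

lemma computable_lift2:
  "computable 2 (\<lambda>ys. F (ys ! 0) (ys ! 1)) \<Longrightarrow> computable n g1 \<Longrightarrow> computable n g2 \<Longrightarrow>
   computable n (\<lambda>xs. F (g1 xs) (g2 xs))"
  using computable_comp[of "[g1, g2]" "\<lambda>ys. F (ys ! 0) (ys ! 1)" n] by (simp add: numeral_2_eq_2)

lemma computable_lift3:
  "computable 3 (\<lambda>ys. F (ys ! 0) (ys ! 1) (ys ! 2)) \<Longrightarrow>
   computable n g1 \<Longrightarrow> computable n g2 \<Longrightarrow> computable n g3 \<Longrightarrow>
   computable n (\<lambda>xs. F (g1 xs) (g2 xs) (g3 xs))"
  using computable_comp[of "[g1, g2, g3]" "\<lambda>ys. F (ys ! 0) (ys ! 1) (ys ! 2)" n]
  by (simp add: numeral_3_eq_3)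

lemma computable_lift4:
  "computable 4 (\<lambda>ys. F (ys ! 0) (ys ! 1) (ys ! 2) (ys ! 3)) \<Longrightarrow>
   computable n g1 \<Longrightarrow> computable n g2 \<Longrightarrow> computable n g3 \<Longrightarrow> computable n g4 \<Longrightarrow>
   computable n (\<lambda>xs. F (g1 xs) (g2 xs) (g3 xs) (g4 xs))"
  using computable_comp[of "[g1, g2, g3, g4]" "\<lambda>ys. F (ys ! 0) (ys ! 1) (ys ! 2) (ys ! 3)" n]
  by (simp add: eval_nat_numeral)

lemma computable_lift5:
  "computable 5 (\<lambda>ys. F (ys ! 0) (ys ! 1) (ys ! 2) (ys ! 3) (ys ! 4)) \<Longrightarrow>
   computable n g1 \<Longrightarrow> computable n g2 \<Longrightarrow> computable n g3 \<Longrightarrow> computable n g4 \<Longrightarrow>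
   computable n g5 \<Longrightarrow> computable n (\<lambda>xs. F (g1 xs) (g2 xs) (g3 xs) (g4 xs) (g5 xs))"
  using computable_comp[of "[g1, g2, g3, g4, g5]"
      "\<lambda>ys. F (ys ! 0) (ys ! 1) (ys ! 2) (ys ! 3) (ys ! 4)" n]
  by (simp add: eval_nat_numeral)

lemma computable_lift7:
  "computable 7 (\<lambda>ys. F (ys ! 0) (ys ! 1) (ys ! 2) (ys ! 3) (ys ! 4) (ys ! 5) (ys ! 6)) \<Longrightarrow>
   computable n g1 \<Longrightarrow> computable n g2 \<Longrightarrow> computable n g3 \<Longrightarrow> computable n g4 \<Longrightarrow>
   computable n g5 \<Longrightarrow> computable n g6 \<Longrightarrow> computable n g7 \<Longrightarrow>
   computable n (\<lambda>xs. F (g1 xs) (g2 xs) (g3 xs) (g4 xs) (g5 xs) (g6 xs) (g7 xs))"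
  using computable_comp[of "[g1, g2, g3, g4, g5, g6, g7]"
      "\<lambda>ys. F (ys ! 0) (ys ! 1) (ys ! 2) (ys ! 3) (ys ! 4) (ys ! 5) (ys ! 6)" n]
  by (simp add: eval_nat_numeral)

lemma computable_lift8:
  "computable 8 (\<lambda>ys. F (ys ! 0) (ys ! 1) (ys ! 2) (ys ! 3) (ys ! 4) (ys ! 5) (ys ! 6) (ys ! 7)) \<Longrightarrow>
   computable n g1 \<Longrightarrow> computable n g2 \<Longrightarrow> computable n g3 \<Longrightarrow> computable n g4 \<Longrightarrow>
   computable n g5 \<Longrightarrow> computable n g6 \<Longrightarrow> computable n g7 \<Longrightarrow> computable n g8 \<Longrightarrow>
   computable n (\<lambda>xs. F (g1 xs) (g2 xs) (g3 xs) (g4 xs) (g5 xs) (g6 xs) (g7 xs) (g8 xs))"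
  using computable_comp[of "[g1, g2, g3, g4, g5, g6, g7, g8]"
      "\<lambda>ys. F (ys ! 0) (ys ! 1) (ys ! 2) (ys ! 3) (ys ! 4) (ys ! 5) (ys ! 6) (ys ! 7)" n]
  by (simp add: eval_nat_numeral)

lemma decidable_lift2:
  "decidable 2 (\<lambda>ys. P (ys ! 0) (ys ! 1)) \<Longrightarrow> computable n g1 \<Longrightarrow> computable n g2 \<Longrightarrow>
   decidable n (\<lambda>xs. P (g1 xs) (g2 xs))"
  unfolding decidable_def by (rule computable_lift2[where F = "\<lambda>a b. if P a b then 1 else 0"])

lemma decidable_lift3:
  "decidable 3 (\<lambda>ys. P (ys ! 0) (ys ! 1) (ys ! 2)) \<Longrightarrow>
   computable n g1 \<Longrightarrow> computable n g2 \<Longrightarrow> computable n g3 \<Longrightarrow>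
   decidable n (\<lambda>xs. P (g1 xs) (g2 xs) (g3 xs))"
  unfolding decidable_def by (rule computable_lift3[where F = "\<lambda>a b c. if P a b c then 1 else 0"])

lemma decidable_lift4:
  "decidable 4 (\<lambda>ys. P (ys ! 0) (ys ! 1) (ys ! 2) (ys ! 3)) \<Longrightarrow>
   computable n g1 \<Longrightarrow> computable n g2 \<Longrightarrow> computable n g3 \<Longrightarrow> computable n g4 \<Longrightarrow>
   decidable n (\<lambda>xs. P (g1 xs) (g2 xs) (g3 xs) (g4 xs))"
  unfolding decidable_def
  by (rule computable_lift4[where F = "\<lambda>a b c d. if P a b c d then 1 else 0"])

lemma decidable_lift5:
  "decidable 5 (\<lambda>ys. P (ys ! 0) (ys ! 1) (ys ! 2) (ys ! 3) (ys ! 4)) \<Longrightarrow>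
   computable n g1 \<Longrightarrow> computable n g2 \<Longrightarrow> computable n g3 \<Longrightarrow> computable n g4 \<Longrightarrow>
   computable n g5 \<Longrightarrow> decidable n (\<lambda>xs. P (g1 xs) (g2 xs) (g3 xs) (g4 xs) (g5 xs))"
  unfolding decidable_def
  by (rule computable_lift5[where F = "\<lambda>a b c d e. if P a b c d e then 1 else 0"])

lemma decidable_lift7:
  "decidable 7 (\<lambda>ys. P (ys ! 0) (ys ! 1) (ys ! 2) (ys ! 3) (ys ! 4) (ys ! 5) (ys ! 6)) \<Longrightarrow>
   computable n g1 \<Longrightarrow> computable n g2 \<Longrightarrow> computable n g3 \<Longrightarrow> computable n g4 \<Longrightarrow>
   computable n g5 \<Longrightarrow> computable n g6 \<Longrightarrow> computable n g7 \<Longrightarrow>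
   decidable n (\<lambda>xs. P (g1 xs) (g2 xs) (g3 xs) (g4 xs) (g5 xs) (g6 xs) (g7 xs))"
  unfolding decidable_def
  by (rule computable_lift7[where F = "\<lambda>a b c d e f g. if P a b c d e f g then 1 else 0"])

lemma decidable_lift8:
  "decidable 8 (\<lambda>ys. P (ys ! 0) (ys ! 1) (ys ! 2) (ys ! 3) (ys ! 4) (ys ! 5) (ys ! 6) (ys ! 7)) \<Longrightarrow>
   computable n g1 \<Longrightarrow> computable n g2 \<Longrightarrow> computable n g3 \<Longrightarrow> computable n g4 \<Longrightarrow>
   computable n g5 \<Longrightarrow> computable n g6 \<Longrightarrow> computable n g7 \<Longrightarrow> computable n g8 \<Longrightarrow>
   decidable n (\<lambda>xs. P (g1 xs) (g2 xs) (g3 xs) (g4 xs) (g5 xs) (g6 xs) (g7 xs) (g8 xs))"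
  unfolding decidable_def
  by (rule computable_lift8[where F = "\<lambda>a b c d e f g h. if P a b c d e f g h then 1 else 0"])

lemma map_nth_upt: "length xs = n \<Longrightarrow> map (\<lambda>i. xs ! i) [0..<n] = xs"
  using map_nth[of xs] by simp

lemma computable_Cons:
  assumes "computable (Suc n) g" "computable n h"
  shows "computable n (\<lambda>xs. g (h xs # xs))"
proof -
  have "computable n (\<lambda>xs. g (map (\<lambda>f. f xs) (h # map (\<lambda>j xs. xs ! j) [0..<n])))"
    by (rule computable_comp) (use assms computable_nth in auto)
  then show ?thesis by (rule computable_cong) (auto simp: comp_def map_nth_upt)
qed

lemma computable_tl:
  assumes "0 < n" "computable (n - 1) g"
  shows "computable n (\<lambda>xs. g (tl xs))"
proof -
  have "computable n (\<lambda>xs. g (map (\<lambda>f. f xs) (map (\<lambda>j xs. xs ! Suc j) [0..<n - 1])))"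
    by (rule computable_comp) (use assms computable_nth in auto)
  then show ?thesis
    by (rule computable_cong) (use assms in \<open>auto simp: comp_def neq_Nil_conv map_nth_upt\<close>)
qed

lemma computable_nth_tl:
  "0 < n \<Longrightarrow> computable (n - 1) (\<lambda>xs. g xs ! j) \<Longrightarrow> computable n (\<lambda>xs. g (tl xs) ! j)"
  by (rule computable_tl[of n "\<lambda>xs. g xs ! j"])

lemma computable_drop_second:
  assumes "computable (Suc n) g"
  shows "computable (Suc (Suc n)) (\<lambda>xs. g (xs ! 0 # tl (tl xs)))"
proof -
  have "computable (Suc (Suc n))
      (\<lambda>xs. g (map (\<lambda>f. f xs) ((\<lambda>xs. xs ! 0) # map (\<lambda>j xs. xs ! Suc (Suc j)) [0..<n])))"
    by (rule computable_comp) (use assms computable_nth in auto)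
  then show ?thesis
    by (rule computable_cong) (auto simp: length_Suc_conv comp_def map_nth_upt)
qed

lemma computable_rec_nat:
  assumes "computable n b" "computable (Suc (Suc n)) (\<lambda>ys. s (ys ! 0) (ys ! 1) (tl (tl ys)))"
    "computable n h"
  shows "computable n (\<lambda>xs. rec_nat (b xs) (\<lambda>k acc. s k acc xs) (h xs))"
  using computable_Cons[OF computable_prim_rec[OF assms(1,2)] assms(3)] by simp

lemma computable_Suc: "computable n g \<Longrightarrow> computable n (\<lambda>xs. Suc (g xs))"
  by (rule computable_lift1[OF computable_Suc_nth])


lemma computable_add2: "computable 2 (\<lambda>xs. xs ! 0 + xs ! 1)"
proof -
  have "computable 2 (\<lambda>xs. rec_nat (xs ! 1) (\<lambda>_ acc. Suc acc) (xs ! 0))"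
    by (intro computable_rec_nat computable_Suc computable_nth) simp_all
  moreover have "rec_nat a (\<lambda>_ acc. Suc acc) k = k + a" for a k :: nat
    by (induction k) simp_all
  ultimately show ?thesis by simp
qed

lemma computable_add: "computable n g1 \<Longrightarrow> computable n g2 \<Longrightarrow> computable n (\<lambda>xs. g1 xs + g2 xs)"
  by (rule computable_lift2[OF computable_add2])

lemma computable_pred: "computable 1 (\<lambda>xs. xs ! 0 - 1)"
proof -
  have "computable 1 (\<lambda>xs. rec_nat 0 (\<lambda>k _. k) (xs ! 0))"
    by (intro computable_rec_nat computable_const computable_nth) simp_all
  moreover have "rec_nat 0 (\<lambda>k _. k) k = k - 1" for k :: nat
    by (cases k) simp_all
  ultimately show ?thesis by simp
qed

lemma computable_diff2: "computable 2 (\<lambda>xs. xs ! 0 - xs ! 1)"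
proof -
  have "computable 2 (\<lambda>xs. rec_nat (xs ! 0) (\<lambda>_ acc. acc - 1) (xs ! 1))"
    by (intro computable_rec_nat computable_lift1[OF computable_pred] computable_nth) simp_all
  moreover have "rec_nat a (\<lambda>_ acc. acc - 1) k = a - k" for a k :: nat
    by (induction k) simp_all
  ultimately show ?thesis by simp
qed

lemma computable_diff: "computable n g1 \<Longrightarrow> computable n g2 \<Longrightarrow> computable n (\<lambda>xs. g1 xs - g2 xs)"
  by (rule computable_lift2[OF computable_diff2])

lemma computable_mult2: "computable 2 (\<lambda>xs. xs ! 0 * xs ! 1)"
proof -
  have "computable 2 (\<lambda>xs. rec_nat 0 (\<lambda>_ acc. acc + xs ! 1) (xs ! 0))"
    by (intro computable_rec_nat computable_add computable_const computable_nth computable_nth_tl)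
      simp_all
  moreover have "rec_nat 0 (\<lambda>_ acc. acc + b) k = k * b" for b k :: nat
    by (induction k) simp_all
  ultimately show ?thesis by simp
qed

lemma computable_mult: "computable n g1 \<Longrightarrow> computable n g2 \<Longrightarrow> computable n (\<lambda>xs. g1 xs * g2 xs)"
  by (rule computable_lift2[OF computable_mult2])

lemma computable_power2: "computable n g \<Longrightarrow> computable n (\<lambda>xs. 2 ^ g xs)"
proof (rule computable_lift1[of "\<lambda>k. 2 ^ k"])
  have "computable 1 (\<lambda>xs. rec_nat 1 (\<lambda>_ acc. acc + acc) (xs ! 0))"
    by (intro computable_rec_nat computable_add computable_const computable_nth) simp_all
  moreover have "rec_nat 1 (\<lambda>_ acc. acc + acc) k = (2::nat) ^ k" for k
    by (induction k) simp_all
  ultimately show "computable 1 (\<lambda>xs. 2 ^ (xs ! 0))" by simp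
qed

lemma computable_sum:
  assumes "computable (Suc n) (\<lambda>ys. G (ys ! 0) (tl ys))" "computable n h"
  shows "computable n (\<lambda>xs. \<Sum>i<h xs. G i xs)"
proof -
  have "computable (Suc (Suc n)) (\<lambda>zs. (\<lambda>ys. G (ys ! 0) (tl ys)) (zs ! 0 # tl (tl zs)))"
    by (rule computable_drop_second[OF assms(1)])
  then have "computable (Suc (Suc n)) (\<lambda>zs. zs ! 1 + G (zs ! 0) (tl (tl zs)))"
    by (intro computable_add computable_nth) simp_all
  then have "computable n (\<lambda>xs. rec_nat 0 (\<lambda>k acc. acc + G k xs) (h xs))"
    by (intro computable_rec_nat computable_const assms(2))
  moreover have "rec_nat 0 (\<lambda>k acc. acc + G k xs) m = (\<Sum>i<m. G i xs)" for m xs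
    by (induction m) simp_all
  ultimately show ?thesis by simp
qed

lemma computable_If:
  assumes "decidable n P" "computable n a" "computable n b"
  shows "computable n (\<lambda>xs. if P xs then a xs else b xs)"
proof -
  have "computable n (\<lambda>xs. (if P xs then 1 else 0) * a xs + (1 - (if P xs then 1 else 0)) * b xs)"
    using assms unfolding decidable_def
    by (intro computable_add computable_mult computable_diff computable_const)
  then show ?thesis by (rule computable_cong) simp
qed

lemma decidable_eq:
  assumes "computable n a" "computable n b"
  shows "decidable n (\<lambda>xs. a xs = b xs)"
proof -
  have "computable n (\<lambda>xs. 1 - ((a xs - b xs) + (b xs - a xs)))"
    by (intro computable_add computable_diff computable_const assms)
  then show ?thesis unfolding decidable_def by (rule computable_cong) auto
qed

lemma decidable_le:
  assumes "computable n a" "computable n b"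
  shows "decidable n (\<lambda>xs. a xs \<le> b xs)"
proof -
  have "computable n (\<lambda>xs. 1 - (a xs - b xs))"
    by (intro computable_diff computable_const assms)
  then show ?thesis unfolding decidable_def by (rule computable_cong) auto
qed

lemma decidable_less:
  assumes "computable n a" "computable n b"
  shows "decidable n (\<lambda>xs. a xs < b xs)"
  using decidable_le[OF computable_Suc[OF assms(1)] assms(2)] by (simp add: Suc_le_eq)

lemma decidable_const: "decidable n (\<lambda>xs. c)"
  unfolding decidable_def by (rule computable_const)

lemma decidable_conj:
  assumes "decidable n P" "decidable n Q"
  shows "decidable n (\<lambda>xs. P xs \<and> Q xs)"
proof -
  have "computable n (\<lambda>xs. (if P xs then 1 else 0) * (if Q xs then 1 else 0))"
    using assms unfolding decidable_def by (rule computable_mult)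
  then show ?thesis unfolding decidable_def by (rule computable_cong) simp
qed

lemma decidable_not:
  assumes "decidable n P"
  shows "decidable n (\<lambda>xs. \<not> P xs)"
proof -
  have "computable n (\<lambda>xs. 1 - (if P xs then 1 else 0))"
    using assms unfolding decidable_def by (intro computable_diff computable_const)
  then show ?thesis unfolding decidable_def by (rule computable_cong) simp
qed

lemma decidable_disj:
  "decidable n P \<Longrightarrow> decidable n Q \<Longrightarrow> decidable n (\<lambda>xs. P xs \<or> Q xs)"
  using decidable_not[OF decidable_conj[OF decidable_not decidable_not]] by simp

lemma decidable_imp:
  "decidable n P \<Longrightarrow> decidable n Q \<Longrightarrow> decidable n (\<lambda>xs. P xs \<longrightarrow> Q xs)"
  using decidable_disj[OF decidable_not] by simp

lemma decidable_all_less: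
  assumes "decidable (Suc n) (\<lambda>ys. P (ys ! 0) (tl ys))" "computable n h"
  shows "decidable n (\<lambda>xs. \<forall>i<h xs. P i xs)"
proof -
  have "computable n (\<lambda>xs. if (\<Sum>i<h xs. if P i xs then 0 else 1) = (0::nat) then 1 else 0)"
    by (intro computable_If decidable_eq computable_sum computable_const assms)
  then show ?thesis unfolding decidable_def by (rule computable_cong) auto
qed

lemma decidable_ex_less:
  assumes "decidable (Suc n) (\<lambda>ys. P (ys ! 0) (tl ys))" "computable n h"
  shows "decidable n (\<lambda>xs. \<exists>i<h xs. P i xs)"
  using decidable_not[OF decidable_all_less[OF decidable_not[OF assms(1)] assms(2)]] by simp

named_theorems computable_intros

(* Every coding function f defined below is first shown computable on its own arguments and then
   registered here in lifted form, computable n g1 ==> ... ==> computable n (f (g1 xs) ...), so that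
   computability of each later definition follows by unfolding it and applying these rules. *)

lemmas [computable_intros] =
  computable_const computable_nth computable_nth_tl computable_Suc computable_add computable_diff
  computable_mult computable_power2 computable_sum computable_rec_nat computable_If
  decidable_eq decidable_le decidable_less decidable_const decidable_conj decidable_not
  decidable_disj decidable_imp decidable_all_less decidable_ex_less

section \<open>Arithmetic coding of pairs and finite sets\<close>

definition div_count :: "nat \<Rightarrow> nat \<Rightarrow> nat" where
  "div_count a m = (\<Sum>i<a. if Suc i * m \<le> a then 1 else 0)"

lemma div_count_computable: "computable 2 (\<lambda>ys. div_count (ys ! 0) (ys ! 1))"
  unfolding div_count_def by (intro computable_intros; simp)

lemmas computable_div_count[computable_intros] = computable_lift2[OF div_count_computable]

lemma div_count_eq: "0 < m \<Longrightarrow> div_count a m = a div m"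
proof -
  assume "0 < m"
  then have "{i. Suc i * m \<le> a} = {i. i < a div m}"
    using less_eq_div_iff_mult_less_eq[of m "Suc _" a] by (simp only: Suc_le_eq)
  moreover have "a div m \<le> a" by simp
  ultimately have "{..<a} \<inter> {i. Suc i * m \<le> a} = {..<a div m}"
    by (auto intro: order.strict_trans2)
  then show ?thesis unfolding div_count_def by (simp add: sum.If_cases)
qed

definition set_mem :: "nat \<Rightarrow> nat \<Rightarrow> bool" where
  "set_mem x S \<longleftrightarrow> (\<exists>j<div_count S (2 ^ x). div_count S (2 ^ x) = Suc (2 * j))"

lemma set_mem_computable: "decidable 2 (\<lambda>ys. set_mem (ys ! 0) (ys ! 1))"
  unfolding set_mem_def by (intro computable_intros; simp)

lemmas decidable_set_mem[computable_intros] = decidable_lift2[OF set_mem_computable]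

lemma set_mem_iff: "set_mem x S \<longleftrightarrow> x \<in> set_decode S"
proof -
  have "(\<exists>j<q. q = Suc (2 * j)) \<longleftrightarrow> odd q" for q :: nat
    by (auto elim!: oddE)
  then show ?thesis unfolding set_mem_def set_decode_def by (simp add: div_count_eq)
qed

definition pair_code :: "nat \<Rightarrow> nat \<Rightarrow> nat" where
  "pair_code a b = (\<Sum>i<Suc (a + b). i) + a"

lemma pair_code_computable: "computable 2 (\<lambda>ys. pair_code (ys ! 0) (ys ! 1))"
  unfolding pair_code_def by (intro computable_intros; simp)

lemmas computable_pair_code[computable_intros] = computable_lift2[OF pair_code_computable]

lemma pair_code_eq: "pair_code a b = prod_encode (a, b)"
proof -
  have "(\<Sum>i<Suc k. i) = triangle k" for k
    by (induction k) auto
  then show ?thesis by (simp add: pair_code_def prod_encode_def)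
qed

definition unpair1 :: "nat \<Rightarrow> nat" where
  "unpair1 c = (\<Sum>a<Suc c. if \<exists>b<Suc c. pair_code a b = c then a else 0)"

definition unpair2 :: "nat \<Rightarrow> nat" where
  "unpair2 c = (\<Sum>b<Suc c. if \<exists>a<Suc c. pair_code a b = c then b else 0)"

lemma unpair1_computable: "computable 1 (\<lambda>ys. unpair1 (ys ! 0))"
  unfolding unpair1_def by (intro computable_intros; simp)

lemmas computable_unpair1[computable_intros] = computable_lift1[OF unpair1_computable]

lemma unpair2_computable: "computable 1 (\<lambda>ys. unpair2 (ys ! 0))"
  unfolding unpair2_def by (intro computable_intros; simp)

lemmas computable_unpair2[computable_intros] = computable_lift1[OF unpair2_computable]

(* Both components of a pair are bounded by its code, so the bounded sums find the unique
   preimage. *)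

lemma unpair1_prod_encode [simp]: "unpair1 (prod_encode (a, b)) = a"
proof -
  let ?c = "prod_encode (a, b)"
  have unique: "(\<exists>b'<Suc ?c. prod_encode (a', b') = ?c) \<longleftrightarrow> a' = a" for a'
    using le_prod_encode_1[of a b] le_prod_encode_2[of b a] by auto
  have "a < Suc ?c" using le_prod_encode_1[of a b] by simp
  then show ?thesis unfolding unpair1_def pair_code_eq unique by simp
qed

lemma unpair2_prod_encode [simp]: "unpair2 (prod_encode (a, b)) = b"
proof -
  let ?c = "prod_encode (a, b)"
  have unique: "(\<exists>a'<Suc ?c. prod_encode (a', b') = ?c) \<longleftrightarrow> b' = b" for b'
    using le_prod_encode_1[of a b] le_prod_encode_2[of b a] by auto
  have "b < Suc ?c" using le_prod_encode_2[of b a] by simp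
  then show ?thesis unfolding unpair2_def pair_code_eq unique by simp
qed

lemma less_set_encode: "finite A \<Longrightarrow> x \<in> A \<Longrightarrow> x < set_encode A"
proof -
  assume "finite A" "x \<in> A"
  then have "2 ^ x \<le> set_encode A"
    unfolding set_encode_def by (intro member_le_sum) auto
  moreover have "x < 2 ^ x" by simp
  ultimately show ?thesis by linarith
qed

lemma sum_If_power2_eq_set_encode:
  assumes "finite A" "A \<subseteq> {..<m}"
  shows "(\<Sum>c<m. if c \<in> A then (2::nat) ^ c else 0) = set_encode A"
proof -
  have "(\<Sum>c<m. if c \<in> A then (2::nat) ^ c else 0) = (\<Sum>c\<in>{c\<in>{..<m}. c \<in> A}. 2 ^ c)"
    by (rule sum.inter_filter[symmetric]) simp
  also have "{c\<in>{..<m}. c \<in> A} = A" using assms by auto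
  finally show ?thesis by (simp add: set_encode_def)
qed

section \<open>The decision procedure on codes\<close>

(* The components of a system code n = enc_tsi T are recovered by alternately subtracting one
   (list_encode puts a Suc in front of every cons cell) and unpairing. *)

definition states_code :: "nat \<Rightarrow> nat" where
  "states_code n = unpair1 (n - 1)"

definition init_code :: "nat \<Rightarrow> nat" where
  "init_code n = unpair1 (unpair2 (n - 1) - 1)"

definition trans_code :: "nat \<Rightarrow> nat" where
  "trans_code n = unpair1 (unpair2 (unpair2 (n - 1) - 1) - 1)"

definition ind_code :: "nat \<Rightarrow> nat" where
  "ind_code n = unpair1 (unpair2 (unpair2 (unpair2 (n - 1) - 1) - 1) - 1)"

definition src_code :: "nat \<Rightarrow> nat" where
  "src_code c = unpair1 c"

definition lab_code :: "nat \<Rightarrow> nat" where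
  "lab_code c = unpair1 (unpair2 c)"

definition tgt_code :: "nat \<Rightarrow> nat" where
  "tgt_code c = unpair2 (unpair2 c)"

definition indep_code :: "nat \<Rightarrow> nat \<Rightarrow> nat \<Rightarrow> bool" where
  "indep_code n c d \<longleftrightarrow> set_mem (pair_code c d) (ind_code n)"

(* A transition option is coded as 0 for None (the fresh transition t_epsilon) and as the successor
   of the transition code otherwise; m = 0 selects leqA and any other m selects ominusA. *)

definition step_code :: "nat \<Rightarrow> nat \<Rightarrow> nat \<Rightarrow> nat \<Rightarrow> bool" where
  "step_code n m t c \<longleftrightarrow>
     (m = 0 \<and> t = 0 \<and> src_code c = init_code n) \<or>
     (m = 0 \<and> t \<noteq> 0 \<and> tgt_code (t - 1) = src_code c \<and> \<not> indep_code n (t - 1) c) \<or>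
     (m \<noteq> 0 \<and> t \<noteq> 0 \<and> tgt_code (t - 1) = src_code c \<and> indep_code n (t - 1) c)"

definition out_code :: "nat \<Rightarrow> nat \<Rightarrow> nat" where
  "out_code n s = (\<Sum>c<trans_code n. if set_mem c (trans_code n) \<and> src_code c = s then 2 ^ c else 0)"

definition otimes_code :: "nat \<Rightarrow> nat \<Rightarrow> nat \<Rightarrow> bool" where
  "otimes_code n c d \<longleftrightarrow> src_code c = src_code d \<and> indep_code n c d"

definition subset_code :: "nat \<Rightarrow> nat \<Rightarrow> bool" where
  "subset_code M R \<longleftrightarrow> (\<forall>c<M. set_mem c M \<longrightarrow> set_mem c R)"

definition sqsub_code :: "nat \<Rightarrow> nat \<Rightarrow> nat \<Rightarrow> bool" where
  "sqsub_code n M R \<longleftrightarrow> subset_code M R \<and>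
     \<not> (\<exists>c<R. set_mem c R \<and> \<not> set_mem c M \<and> (\<forall>d<M. set_mem d M \<longrightarrow> otimes_code n c d))"

definition conflict_free_code :: "nat \<Rightarrow> nat \<Rightarrow> bool" where
  "conflict_free_code n M \<longleftrightarrow> subset_code M (trans_code n) \<and>
     (\<exists>s<Suc M. \<forall>c<M. set_mem c M \<longrightarrow> src_code c = s) \<and>
     (\<forall>c<M. set_mem c M \<longrightarrow> (\<forall>d<M. set_mem d M \<longrightarrow> c \<noteq> d \<longrightarrow> otimes_code n c d))"

definition support_code :: "nat \<Rightarrow> nat \<Rightarrow> bool" where
  "support_code n M \<longleftrightarrow>
     (\<exists>s<Suc (trans_code n). M = out_code n s) \<or> (M \<noteq> 0 \<and> conflict_free_code n M)"

definition procset_code :: "nat \<Rightarrow> nat \<Rightarrow> bool" where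
  "procset_code n M \<longleftrightarrow>
     (\<exists>s<states_code n. set_mem s (states_code n) \<and> M = out_code n s) \<or>
     (support_code n M \<and> (\<exists>s<states_code n. set_mem s (states_code n) \<and> sqsub_code n M (out_code n s)))"

definition valid_code :: "nat \<Rightarrow> nat \<Rightarrow> nat \<Rightarrow> bool" where
  "valid_code n R t \<longleftrightarrow> subset_code R (trans_code n) \<and> (t = 0 \<or> set_mem (t - 1) (trans_code n))"

definition quad_code :: "nat \<Rightarrow> nat \<Rightarrow> nat \<Rightarrow> nat \<Rightarrow> nat" where
  "quad_code a b c d = pair_code (pair_code a b) (pair_code c d)"

definition table_mem :: "nat \<Rightarrow> nat \<Rightarrow> nat \<Rightarrow> nat \<Rightarrow> nat \<Rightarrow> bool" where
  "table_mem Tb a b c d \<longleftrightarrow> set_mem (quad_code a b c d) Tb"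

definition forth_step_code ::
    "nat \<Rightarrow> nat \<Rightarrow> nat \<Rightarrow> nat \<Rightarrow> nat \<Rightarrow> nat \<Rightarrow> nat \<Rightarrow> nat \<Rightarrow> bool" where
  "forth_step_code n1 n2 Tb m R1 t1 R2 t2 \<longleftrightarrow>
     (\<forall>c<R1. set_mem c R1 \<and> step_code n1 m t1 c \<longrightarrow>
       (\<exists>d<R2. set_mem d R2 \<and> lab_code d = lab_code c \<and> step_code n2 m t2 d \<and>
          table_mem Tb (out_code n1 (tgt_code c)) (Suc c) (out_code n2 (tgt_code d)) (Suc d)))"

definition back_step_code ::
    "nat \<Rightarrow> nat \<Rightarrow> nat \<Rightarrow> nat \<Rightarrow> nat \<Rightarrow> nat \<Rightarrow> nat \<Rightarrow> nat \<Rightarrow> bool" where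
  "back_step_code n1 n2 Tb m R1 t1 R2 t2 \<longleftrightarrow>
     (\<forall>d<R2. set_mem d R2 \<and> step_code n2 m t2 d \<longrightarrow>
       (\<exists>c<R1. set_mem c R1 \<and> lab_code c = lab_code d \<and> step_code n1 m t1 c \<and>
          table_mem Tb (out_code n1 (tgt_code c)) (Suc c) (out_code n2 (tgt_code d)) (Suc d)))"

definition forth_sub_code :: "nat \<Rightarrow> nat \<Rightarrow> nat \<Rightarrow> nat \<Rightarrow> nat \<Rightarrow> nat \<Rightarrow> nat \<Rightarrow> bool" where
  "forth_sub_code n1 n2 Tb R1 t1 R2 t2 \<longleftrightarrow>
     (\<forall>M<Suc R1. procset_code n1 M \<and> sqsub_code n1 M R1 \<longrightarrow>
       (\<exists>M'<Suc R2. procset_code n2 M' \<and> sqsub_code n2 M' R2 \<and> table_mem Tb M t1 M' t2))"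

definition back_sub_code :: "nat \<Rightarrow> nat \<Rightarrow> nat \<Rightarrow> nat \<Rightarrow> nat \<Rightarrow> nat \<Rightarrow> nat \<Rightarrow> bool" where
  "back_sub_code n1 n2 Tb R1 t1 R2 t2 \<longleftrightarrow>
     (\<forall>M'<Suc R2. procset_code n2 M' \<and> sqsub_code n2 M' R2 \<longrightarrow>
       (\<exists>M<Suc R1. procset_code n1 M \<and> sqsub_code n1 M R1 \<and> table_mem Tb M t1 M' t2))"

definition refine_code :: "nat \<Rightarrow> nat \<Rightarrow> nat \<Rightarrow> nat \<Rightarrow> nat \<Rightarrow> nat \<Rightarrow> nat \<Rightarrow> bool" where
  "refine_code n1 n2 Tb R1 t1 R2 t2 \<longleftrightarrow> table_mem Tb R1 t1 R2 t2 \<and>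
     forth_step_code n1 n2 Tb 0 R1 t1 R2 t2 \<and> back_step_code n1 n2 Tb 0 R1 t1 R2 t2 \<and>
     forth_step_code n1 n2 Tb 1 R1 t1 R2 t2 \<and> back_step_code n1 n2 Tb 1 R1 t1 R2 t2 \<and>
     forth_sub_code n1 n2 Tb R1 t1 R2 t2 \<and> back_sub_code n1 n2 Tb R1 t1 R2 t2"

definition quad_set_code :: "nat \<Rightarrow> nat \<Rightarrow> (nat \<Rightarrow> nat \<Rightarrow> nat \<Rightarrow> nat \<Rightarrow> bool) \<Rightarrow> nat" where
  "quad_set_code n1 n2 P =
     (\<Sum>a<Suc (trans_code n1). \<Sum>b<Suc (trans_code n1). \<Sum>c<Suc (trans_code n2). \<Sum>d<Suc (trans_code n2).
        if valid_code n1 a b \<and> valid_code n2 c d \<and> P a b c d then 2 ^ quad_code a b c d else 0)"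

definition table_refine :: "nat \<Rightarrow> nat \<Rightarrow> nat \<Rightarrow> nat" where
  "table_refine n1 n2 Tb = quad_set_code n1 n2 (refine_code n1 n2 Tb)"

(* table n1 n2 k codes the quadruples of codes of pairs of processes that agree up to depth k. *)

definition table :: "nat \<Rightarrow> nat \<Rightarrow> nat \<Rightarrow> nat" where
  "table n1 n2 k = rec_nat (quad_set_code n1 n2 (\<lambda>_ _ _ _. True)) (\<lambda>_ Tb. table_refine n1 n2 Tb) k"

definition table_bound :: "nat \<Rightarrow> nat \<Rightarrow> nat" where
  "table_bound n1 n2 = Suc (trans_code n1) * Suc (trans_code n1) * Suc (trans_code n2) * Suc (trans_code n2)"

definition decide_tfl :: "nat \<Rightarrow> nat \<Rightarrow> nat" where
  "decide_tfl n1 n2 =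
     (if table_mem (table n1 n2 (table_bound n1 n2)) (out_code n1 (init_code n1)) 0
           (out_code n2 (init_code n2)) 0 then 1 else 0)"

lemma states_code_computable: "computable 1 (\<lambda>ys. states_code (ys ! 0))"
  unfolding states_code_def by (intro computable_intros; simp)
lemmas computable_states_code[computable_intros] = computable_lift1[OF states_code_computable]

lemma init_code_computable: "computable 1 (\<lambda>ys. init_code (ys ! 0))"
  unfolding init_code_def by (intro computable_intros; simp)
lemmas computable_init_code[computable_intros] = computable_lift1[OF init_code_computable]

lemma trans_code_computable: "computable 1 (\<lambda>ys. trans_code (ys ! 0))"
  unfolding trans_code_def by (intro computable_intros; simp)
lemmas computable_trans_code[computable_intros] = computable_lift1[OF trans_code_computable]

lemma ind_code_computable: "computable 1 (\<lambda>ys. ind_code (ys ! 0))"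
  unfolding ind_code_def by (intro computable_intros; simp)
lemmas computable_ind_code[computable_intros] = computable_lift1[OF ind_code_computable]

lemma src_code_computable: "computable 1 (\<lambda>ys. src_code (ys ! 0))"
  unfolding src_code_def by (intro computable_intros; simp)
lemmas computable_src_code[computable_intros] = computable_lift1[OF src_code_computable]

lemma lab_code_computable: "computable 1 (\<lambda>ys. lab_code (ys ! 0))"
  unfolding lab_code_def by (intro computable_intros; simp)
lemmas computable_lab_code[computable_intros] = computable_lift1[OF lab_code_computable]

lemma tgt_code_computable: "computable 1 (\<lambda>ys. tgt_code (ys ! 0))"
  unfolding tgt_code_def by (intro computable_intros; simp)
lemmas computable_tgt_code[computable_intros] = computable_lift1[OF tgt_code_computable]

lemma indep_code_computable: "decidable 3 (\<lambda>ys. indep_code (ys ! 0) (ys ! 1) (ys ! 2))"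
  unfolding indep_code_def by (intro computable_intros; simp)
lemmas decidable_indep_code[computable_intros] = decidable_lift3[OF indep_code_computable]

lemma step_code_computable: "decidable 4 (\<lambda>ys. step_code (ys ! 0) (ys ! 1) (ys ! 2) (ys ! 3))"
  unfolding step_code_def by (intro computable_intros; simp)
lemmas decidable_step_code[computable_intros] = decidable_lift4[OF step_code_computable]

lemma out_code_computable: "computable 2 (\<lambda>ys. out_code (ys ! 0) (ys ! 1))"
  unfolding out_code_def by (intro computable_intros; simp)
lemmas computable_out_code[computable_intros] = computable_lift2[OF out_code_computable]

lemma otimes_code_computable: "decidable 3 (\<lambda>ys. otimes_code (ys ! 0) (ys ! 1) (ys ! 2))"
  unfolding otimes_code_def by (intro computable_intros; simp)
lemmas decidable_otimes_code[computable_intros] = decidable_lift3[OF otimes_code_computable]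

lemma subset_code_computable: "decidable 2 (\<lambda>ys. subset_code (ys ! 0) (ys ! 1))"
  unfolding subset_code_def by (intro computable_intros; simp)
lemmas decidable_subset_code[computable_intros] = decidable_lift2[OF subset_code_computable]

lemma sqsub_code_computable: "decidable 3 (\<lambda>ys. sqsub_code (ys ! 0) (ys ! 1) (ys ! 2))"
  unfolding sqsub_code_def by (intro computable_intros; simp)
lemmas decidable_sqsub_code[computable_intros] = decidable_lift3[OF sqsub_code_computable]

lemma conflict_free_code_computable: "decidable 2 (\<lambda>ys. conflict_free_code (ys ! 0) (ys ! 1))"
  unfolding conflict_free_code_def by (intro computable_intros; simp)
lemmas decidable_conflict_free_code[computable_intros] =
  decidable_lift2[OF conflict_free_code_computable]

lemma support_code_computable: "decidable 2 (\<lambda>ys. support_code (ys ! 0) (ys ! 1))"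
  unfolding support_code_def by (intro computable_intros; simp)
lemmas decidable_support_code[computable_intros] = decidable_lift2[OF support_code_computable]

lemma procset_code_computable: "decidable 2 (\<lambda>ys. procset_code (ys ! 0) (ys ! 1))"
  unfolding procset_code_def by (intro computable_intros; simp)
lemmas decidable_procset_code[computable_intros] = decidable_lift2[OF procset_code_computable]

lemma valid_code_computable: "decidable 3 (\<lambda>ys. valid_code (ys ! 0) (ys ! 1) (ys ! 2))"
  unfolding valid_code_def by (intro computable_intros; simp)
lemmas decidable_valid_code[computable_intros] = decidable_lift3[OF valid_code_computable]

lemma quad_code_computable: "computable 4 (\<lambda>ys. quad_code (ys ! 0) (ys ! 1) (ys ! 2) (ys ! 3))"
  unfolding quad_code_def by (intro computable_intros; simp)
lemmas computable_quad_code[computable_intros] = computable_lift4[OF quad_code_computable]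

lemma table_mem_computable:
  "decidable 5 (\<lambda>ys. table_mem (ys ! 0) (ys ! 1) (ys ! 2) (ys ! 3) (ys ! 4))"
  unfolding table_mem_def by (intro computable_intros; simp)
lemmas decidable_table_mem[computable_intros] = decidable_lift5[OF table_mem_computable]

lemma forth_step_code_computable:
  "decidable 8 (\<lambda>ys. forth_step_code (ys ! 0) (ys ! 1) (ys ! 2) (ys ! 3) (ys ! 4) (ys ! 5) (ys ! 6) (ys ! 7))"
  unfolding forth_step_code_def by (intro computable_intros; simp)
lemmas decidable_forth_step_code[computable_intros] = decidable_lift8[OF forth_step_code_computable]

lemma back_step_code_computable:
  "decidable 8 (\<lambda>ys. back_step_code (ys ! 0) (ys ! 1) (ys ! 2) (ys ! 3) (ys ! 4) (ys ! 5) (ys ! 6) (ys ! 7))"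
  unfolding back_step_code_def by (intro computable_intros; simp)
lemmas decidable_back_step_code[computable_intros] = decidable_lift8[OF back_step_code_computable]

lemma forth_sub_code_computable:
  "decidable 7 (\<lambda>ys. forth_sub_code (ys ! 0) (ys ! 1) (ys ! 2) (ys ! 3) (ys ! 4) (ys ! 5) (ys ! 6))"
  unfolding forth_sub_code_def by (intro computable_intros; simp)
lemmas decidable_forth_sub_code[computable_intros] = decidable_lift7[OF forth_sub_code_computable]

lemma back_sub_code_computable:
  "decidable 7 (\<lambda>ys. back_sub_code (ys ! 0) (ys ! 1) (ys ! 2) (ys ! 3) (ys ! 4) (ys ! 5) (ys ! 6))"
  unfolding back_sub_code_def by (intro computable_intros; simp)
lemmas decidable_back_sub_code[computable_intros] = decidable_lift7[OF back_sub_code_computable]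

lemma refine_code_computable:
  "decidable 7 (\<lambda>ys. refine_code (ys ! 0) (ys ! 1) (ys ! 2) (ys ! 3) (ys ! 4) (ys ! 5) (ys ! 6))"
  unfolding refine_code_def by (intro computable_intros; simp)
lemmas decidable_refine_code[computable_intros] = decidable_lift7[OF refine_code_computable]

lemma table_refine_computable: "computable 3 (\<lambda>ys. table_refine (ys ! 0) (ys ! 1) (ys ! 2))"
  unfolding table_refine_def quad_set_code_def by (intro computable_intros; simp)
lemmas computable_table_refine[computable_intros] = computable_lift3[OF table_refine_computable]

lemma table_computable: "computable 3 (\<lambda>ys. table (ys ! 0) (ys ! 1) (ys ! 2))"
  unfolding table_def quad_set_code_def by (intro computable_intros; simp)
lemmas computable_table[computable_intros] = computable_lift3[OF table_computable]

lemma table_bound_computable: "computable 2 (\<lambda>ys. table_bound (ys ! 0) (ys ! 1))"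
  unfolding table_bound_def by (intro computable_intros; simp)
lemmas computable_table_bound[computable_intros] = computable_lift2[OF table_bound_computable]

lemma decide_tfl_computable: "computable 2 (\<lambda>ys. decide_tfl (ys ! 0) (ys ! 1))"
  unfolding decide_tfl_def by (intro computable_intros; simp)

definition trans_set_code :: "trans set \<Rightarrow> nat" where
  "trans_set_code R = set_encode (enc_trans ` R)"

definition trans_opt_code :: "trans option \<Rightarrow> nat" where
  "trans_opt_code t = (case t of None \<Rightarrow> 0 | Some r \<Rightarrow> Suc (enc_trans r))"

lemma src_code_enc_trans [simp]: "src_code (enc_trans r) = src r"
  and lab_code_enc_trans [simp]: "lab_code (enc_trans r) = lab r"
  and tgt_code_enc_trans [simp]: "tgt_code (enc_trans r) = tgt r"
  by (simp_all add: enc_trans_def src_code_def lab_code_def tgt_code_def)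

lemma enc_trans_eq_iff [simp]: "enc_trans r = enc_trans r' \<longleftrightarrow> r = r'"
proof
  assume "enc_trans r = enc_trans r'"
  then have "src r = src r'" "lab r = lab r'" "tgt r = tgt r'"
    by (metis src_code_enc_trans lab_code_enc_trans tgt_code_enc_trans)+
  then show "r = r'" by (cases r; cases r') (simp add: src_def lab_def tgt_def)
qed simp

lemma inj_enc_trans: "inj enc_trans"
  by (rule injI) simp

lemma set_mem_trans_set_code: "finite R \<Longrightarrow> set_mem c (trans_set_code R) \<longleftrightarrow> c \<in> enc_trans ` R"
  by (simp add: set_mem_iff trans_set_code_def)

lemma set_mem_enc_trans [simp]:
  "finite R \<Longrightarrow> set_mem (enc_trans r) (trans_set_code R) \<longleftrightarrow> r \<in> R"
  by (auto simp: set_mem_trans_set_code)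

lemma enc_trans_less_trans_set_code: "finite R \<Longrightarrow> r \<in> R \<Longrightarrow> enc_trans r < trans_set_code R"
  unfolding trans_set_code_def by (rule less_set_encode) auto

lemma trans_set_code_mono: "finite R \<Longrightarrow> M \<subseteq> R \<Longrightarrow> trans_set_code M \<le> trans_set_code R"
  unfolding trans_set_code_def set_encode_def by (rule sum_mono2) auto

lemma trans_set_code_eq_iff:
  "finite M \<Longrightarrow> finite R \<Longrightarrow> trans_set_code M = trans_set_code R \<longleftrightarrow> M = R"
proof
  assume fin: "finite M" "finite R" and "trans_set_code M = trans_set_code R"
  then have "enc_trans ` M = enc_trans ` R"
    by (metis finite_imageI set_encode_inverse trans_set_code_def)
  then show "M = R" using inj_enc_trans by (simp add: inj_image_eq_iff)
qed simp

lemma trans_set_code_eq_0_iff: "finite M \<Longrightarrow> trans_set_code M = 0 \<longleftrightarrow> M = {}"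
  using trans_set_code_eq_iff[of M "{}"] by (simp add: trans_set_code_def)

lemma all_less_trans_set_code:
  "finite M \<Longrightarrow>
   (\<forall>c<trans_set_code M. set_mem c (trans_set_code M) \<and> Q c \<longrightarrow> P c) \<longleftrightarrow>
   (\<forall>r\<in>M. Q (enc_trans r) \<longrightarrow> P (enc_trans r))"
  by (auto simp: set_mem_trans_set_code enc_trans_less_trans_set_code)

lemma ex_less_trans_set_code:
  "finite M \<Longrightarrow>
   (\<exists>c<trans_set_code M. set_mem c (trans_set_code M) \<and> P c) \<longleftrightarrow> (\<exists>r\<in>M. P (enc_trans r))"
  by (auto simp: set_mem_trans_set_code intro: enc_trans_less_trans_set_code)

lemma subset_code_trans_set_code:
  "finite M \<Longrightarrow> finite R \<Longrightarrow> subset_code (trans_set_code M) (trans_set_code R) \<longleftrightarrow> M \<subseteq> R"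
  unfolding subset_code_def using all_less_trans_set_code[of M "\<lambda>_. True"] by auto

lemma trans_set_code_restrict:
  assumes "finite R" "subset_code M (trans_set_code R)"
  shows "M = trans_set_code {r\<in>R. set_mem (enc_trans r) M}"
proof -
  have "set_decode M \<subseteq> enc_trans ` R"
  proof
    fix x assume x: "x \<in> set_decode M"
    then have "x < M" using less_set_encode[of "set_decode M" x] by simp
    moreover have "set_mem x M" using x by (simp add: set_mem_iff)
    ultimately show "x \<in> enc_trans ` R"
      using assms unfolding subset_code_def by (simp add: set_mem_trans_set_code)
  qed
  then have "set_decode M = enc_trans ` {r\<in>R. set_mem (enc_trans r) M}"
    by (auto simp: set_mem_iff)
  then show ?thesis by (metis set_decode_inverse trans_set_code_def)
qed

lemma finite_Ind: "finite_tsi T \<Longrightarrow> finite (Ind T)"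
  unfolding finite_tsi_def is_tsi_def by (meson finite_SigmaI finite_subset)

lemma finite_Xs: "finite_tsi T \<Longrightarrow> finite (Xs T s)"
  by (simp add: Xs_def finite_tsi_def)

lemma Xs_subset_Tr: "Xs T s \<subseteq> Tr T"
  by (auto simp: Xs_def)

context
  fixes T :: tsi
  assumes fin: "finite_tsi T"
begin

lemma finite_Tr: "finite (Tr T)"
  using fin by (simp add: finite_tsi_def)

lemma finite_subset_Tr: "M \<subseteq> Tr T \<Longrightarrow> finite M"
  using finite_Tr by (rule finite_subset[rotated])

lemma states_code_enc_tsi: "states_code (enc_tsi T) = set_encode (St T)"
  and init_code_enc_tsi: "init_code (enc_tsi T) = init T"
  and trans_code_enc_tsi: "trans_code (enc_tsi T) = trans_set_code (Tr T)"
  and ind_code_enc_tsi: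
    "ind_code (enc_tsi T) = set_encode ((\<lambda>(t, u). prod_encode (enc_trans t, enc_trans u)) ` Ind T)"
  by (simp_all add: enc_tsi_def states_code_def init_code_def trans_code_def ind_code_def
      trans_set_code_def)

lemma indep_code_enc_trans:
  "indep_code (enc_tsi T) (enc_trans r) (enc_trans r') \<longleftrightarrow> (r, r') \<in> Ind T"
proof -
  have "inj_on (\<lambda>(t, u). prod_encode (enc_trans t, enc_trans u)) (Ind T)"
    by (auto simp: inj_on_def)
  then show ?thesis
    using finite_Ind[OF fin]
    by (force simp: indep_code_def ind_code_enc_tsi set_mem_iff pair_code_eq)
qed

lemma step_code_enc_tsi:
  "step_code (enc_tsi T) m (trans_opt_code t) (enc_trans r) \<longleftrightarrow> step_rel m T t r"
  by (cases t) (auto simp: step_code_def trans_opt_code_def step_rel_def leqA_def ominusA_def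
      indep_code_enc_trans init_code_enc_tsi)

lemma out_code_enc_tsi: "out_code (enc_tsi T) s = trans_set_code (Xs T s)"
proof -
  have "out_code (enc_tsi T) s =
      (\<Sum>c<trans_code (enc_tsi T). if c \<in> enc_trans ` Xs T s then 2 ^ c else 0)"
    unfolding out_code_def using finite_Tr
    by (intro sum.cong refl) (auto simp: trans_code_enc_tsi set_mem_trans_set_code Xs_def)
  also have "\<dots> = trans_set_code (Xs T s)"
    unfolding trans_set_code_def
    by (rule sum_If_power2_eq_set_encode)
      (use finite_Xs[OF fin] finite_Tr Xs_subset_Tr in
        \<open>auto simp: trans_code_enc_tsi intro!: enc_trans_less_trans_set_code\<close>)
  finally show ?thesis .
qed

lemma otimes_code_enc_trans:
  "otimes_code (enc_tsi T) (enc_trans r) (enc_trans r') \<longleftrightarrow> otimes T r r'"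
  by (simp add: otimes_code_def otimes_def indep_code_enc_trans)

lemma sqsub_code_trans_set_code:
  assumes "M \<subseteq> Tr T" "R \<subseteq> Tr T"
  shows "sqsub_code (enc_tsi T) (trans_set_code M) (trans_set_code R) \<longleftrightarrow> sqsub T M R"
  using finite_subset_Tr[OF assms(1)] finite_subset_Tr[OF assms(2)]
  unfolding sqsub_code_def sqsub_def
  by (simp add: subset_code_trans_set_code ex_less_trans_set_code all_less_trans_set_code
      otimes_code_enc_trans) blast

lemma src_less_trans_set_code: "r \<in> Tr T \<Longrightarrow> src r < trans_set_code (Tr T)"
  by (metis enc_trans_def enc_trans_less_trans_set_code finite_Tr le_less_trans le_prod_encode_1)

lemma conflict_free_code_trans_set_code:
  assumes "M \<subseteq> Tr T"
  shows "conflict_free_code (enc_tsi T) (trans_set_code M) \<longleftrightarrow> conflict_free T M"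
proof -
  have fM: "finite M" using finite_subset_Tr[OF assms] .
  have "(\<exists>s<Suc (trans_set_code M). \<forall>t\<in>M. src t = s) \<longleftrightarrow> (\<exists>s. \<forall>t\<in>M. src t = s)"
  proof
    assume "\<exists>s. \<forall>t\<in>M. src t = s"
    then obtain s where s: "\<forall>t\<in>M. src t = s" by blast
    show "\<exists>s<Suc (trans_set_code M). \<forall>t\<in>M. src t = s"
    proof (cases "M = {}")
      case False
      then obtain t where t: "t \<in> M" by blast
      have "src t \<le> enc_trans t" by (simp add: enc_trans_def le_prod_encode_1)
      also have "\<dots> < trans_set_code M" using enc_trans_less_trans_set_code[OF fM t] .
      finally show ?thesis using s t by (intro exI[of _ s]) auto
    qed auto
  qed auto
  then show ?thesis
    unfolding conflict_free_code_def conflict_free_def using fM assms finite_Tr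
    by (simp add: subset_code_trans_set_code all_less_trans_set_code[of M "\<lambda>_. True", simplified]
        otimes_code_enc_trans trans_code_enc_tsi)
qed

lemma support_code_trans_set_code:
  assumes "M \<subseteq> Tr T"
  shows "support_code (enc_tsi T) (trans_set_code M) \<longleftrightarrow> support_set T M"
proof -
  have fM: "finite M" using finite_subset_Tr[OF assms] .
  have Xs_empty: "Xs T s = {}" if "s \<ge> trans_set_code (Tr T)" for s
    using that by (auto simp: Xs_def dest: src_less_trans_set_code)
  have "(\<exists>s<Suc (trans_set_code (Tr T)). M = Xs T s) \<longleftrightarrow> (\<exists>s. M = Xs T s)"
  proof
    assume "\<exists>s. M = Xs T s"
    then obtain s where s: "M = Xs T s" by blast
    show "\<exists>s<Suc (trans_set_code (Tr T)). M = Xs T s"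
    proof (cases "s < trans_set_code (Tr T)")
      case False
      then show ?thesis
        using s Xs_empty[of s] Xs_empty[of "trans_set_code (Tr T)"]
        by (intro exI[of _ "trans_set_code (Tr T)"]) auto
    qed (use s in \<open>intro exI[of _ s], auto\<close>)
  qed auto
  then show ?thesis
    unfolding support_code_def support_set_def using fM assms finite_Xs[OF fin]
    by (simp add: out_code_enc_tsi trans_code_enc_tsi trans_set_code_eq_iff
        trans_set_code_eq_0_iff conflict_free_code_trans_set_code)
qed

lemma procset_code_trans_set_code:
  assumes "M \<subseteq> Tr T"
  shows "procset_code (enc_tsi T) (trans_set_code M) \<longleftrightarrow> M \<in> procsets T"
proof -
  have states: "(\<exists>s<states_code (enc_tsi T). set_mem s (states_code (enc_tsi T)) \<and> P s) \<longleftrightarrow>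
      (\<exists>s\<in>St T. P s)" for P
    using fin less_set_encode[of "St T"] by (auto simp: finite_tsi_def states_code_enc_tsi set_mem_iff)
  show ?thesis
    unfolding procset_code_def procsets_def
    using finite_subset_Tr[OF assms] assms finite_Xs[OF fin] Xs_subset_Tr
    by (simp add: states out_code_enc_tsi trans_set_code_eq_iff support_code_trans_set_code
        sqsub_code_trans_set_code) blast
qed

lemma all_procset_code_iff:
  assumes "R \<subseteq> Tr T"
  shows "(\<forall>M<Suc (trans_set_code R).
            procset_code (enc_tsi T) M \<and> sqsub_code (enc_tsi T) M (trans_set_code R) \<longrightarrow> P M) \<longleftrightarrow>
         (\<forall>M\<in>procsets T. sqsub T M R \<longrightarrow> P (trans_set_code M))"
proof
  assume H: "\<forall>M<Suc (trans_set_code R).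
    procset_code (enc_tsi T) M \<and> sqsub_code (enc_tsi T) M (trans_set_code R) \<longrightarrow> P M"
  show "\<forall>M\<in>procsets T. sqsub T M R \<longrightarrow> P (trans_set_code M)"
  proof (intro ballI impI)
    fix M assume M: "M \<in> procsets T" "sqsub T M R"
    have M_sub: "M \<subseteq> Tr T" using M(1) by (rule procsets_subset_Tr)
    have "trans_set_code M < Suc (trans_set_code R)"
      using M(2) trans_set_code_mono[OF finite_subset_Tr[OF assms]]
      by (simp add: sqsub_def le_imp_less_Suc)
    moreover have "procset_code (enc_tsi T) (trans_set_code M)"
      using M(1) procset_code_trans_set_code[OF M_sub] by simp
    moreover have "sqsub_code (enc_tsi T) (trans_set_code M) (trans_set_code R)"
      using M(2) sqsub_code_trans_set_code[OF M_sub assms] by simp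
    ultimately show "P (trans_set_code M)" using H by blast
  qed
next
  assume H: "\<forall>M\<in>procsets T. sqsub T M R \<longrightarrow> P (trans_set_code M)"
  show "\<forall>M<Suc (trans_set_code R).
    procset_code (enc_tsi T) M \<and> sqsub_code (enc_tsi T) M (trans_set_code R) \<longrightarrow> P M"
  proof (intro allI impI)
    fix M assume M: "procset_code (enc_tsi T) M \<and> sqsub_code (enc_tsi T) M (trans_set_code R)"
    define M' where "M' = {r\<in>R. set_mem (enc_trans r) M}"
    have M'_sub: "M' \<subseteq> Tr T" using assms by (auto simp: M'_def)
    have "M = trans_set_code M'"
      unfolding M'_def
      by (rule trans_set_code_restrict[OF finite_subset_Tr[OF assms]]) (use M in \<open>simp add: sqsub_code_def\<close>)
    with M H show "P M"
      using procset_code_trans_set_code[OF M'_sub] sqsub_code_trans_set_code[OF M'_sub assms] by auto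
  qed
qed

lemma ex_procset_code_iff:
  assumes "R \<subseteq> Tr T"
  shows "(\<exists>M<Suc (trans_set_code R).
            procset_code (enc_tsi T) M \<and> sqsub_code (enc_tsi T) M (trans_set_code R) \<and> P M) \<longleftrightarrow>
         (\<exists>M\<in>procsets T. sqsub T M R \<and> P (trans_set_code M))"
  using all_procset_code_iff[OF assms, of "\<lambda>M. \<not> P M"] by blast

end

section \<open>Correctness of the decision procedure\<close>

definition valid_proc :: "tsi \<Rightarrow> proc \<Rightarrow> bool" where
  "valid_proc T p \<longleftrightarrow> fst p \<subseteq> Tr T \<and> (\<forall>r. snd p = Some r \<longrightarrow> r \<in> Tr T)"

fun quad_code_tuple :: "nat \<times> nat \<times> nat \<times> nat \<Rightarrow> nat" where
  "quad_code_tuple (a, b, c, d) = quad_code a b c d"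

definition proc_codes :: "proc \<Rightarrow> proc \<Rightarrow> nat \<times> nat \<times> nat \<times> nat" where
  "proc_codes p q =
     (trans_set_code (fst p), trans_opt_code (snd p), trans_set_code (fst q), trans_opt_code (snd q))"

context
  fixes T1 T2 :: tsi and Tb :: nat and A :: "proc \<Rightarrow> proc \<Rightarrow> bool"
  assumes fin1: "finite_tsi T1" and fin2: "finite_tsi T2"
    and table_mem_iff: "\<And>p q. valid_proc T1 p \<Longrightarrow> valid_proc T2 q \<Longrightarrow>
       set_mem (quad_code_tuple (proc_codes p q)) Tb \<longleftrightarrow> A p q"
begin

lemma table_mem_successors:
  assumes "r \<in> Tr T1" "r' \<in> Tr T2"
  shows "table_mem Tb (trans_set_code (Xs T1 (tgt r))) (Suc (enc_trans r))
      (trans_set_code (Xs T2 (tgt r'))) (Suc (enc_trans r')) \<longleftrightarrow>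
    A (Xs T1 (tgt r), Some r) (Xs T2 (tgt r'), Some r')"
  using assms table_mem_iff[of "(Xs T1 (tgt r), Some r)" "(Xs T2 (tgt r'), Some r')"]
  by (simp add: valid_proc_def proc_codes_def trans_opt_code_def table_mem_def Xs_subset_Tr)

lemma forth_step_code_iff:
  assumes "R1 \<subseteq> Tr T1" "R2 \<subseteq> Tr T2"
  shows "forth_step_code (enc_tsi T1) (enc_tsi T2) Tb m (trans_set_code R1) (trans_opt_code t1)
      (trans_set_code R2) (trans_opt_code t2) \<longleftrightarrow> forth_step T1 T2 A m (R1, t1) (R2, t2)"
proof -
  have "forth_step_code (enc_tsi T1) (enc_tsi T2) Tb m (trans_set_code R1) (trans_opt_code t1)
      (trans_set_code R2) (trans_opt_code t2) \<longleftrightarrow>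
    (\<forall>r\<in>R1. step_rel m T1 t1 r \<longrightarrow> (\<exists>r'\<in>R2. lab r' = lab r \<and> step_rel m T2 t2 r' \<and>
       table_mem Tb (trans_set_code (Xs T1 (tgt r))) (Suc (enc_trans r))
         (trans_set_code (Xs T2 (tgt r'))) (Suc (enc_trans r'))))"
    unfolding forth_step_code_def
    using finite_subset_Tr[OF fin1 assms(1)] finite_subset_Tr[OF fin2 assms(2)]
    by (simp add: all_less_trans_set_code ex_less_trans_set_code step_code_enc_tsi[OF fin1]
        step_code_enc_tsi[OF fin2] out_code_enc_tsi[OF fin1] out_code_enc_tsi[OF fin2])
  also have "\<dots> \<longleftrightarrow> forth_step T1 T2 A m (R1, t1) (R2, t2)"
    unfolding forth_step_def fst_conv snd_conv using assms table_mem_successors by blast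
  finally show ?thesis .
qed

lemma back_step_code_iff:
  assumes "R1 \<subseteq> Tr T1" "R2 \<subseteq> Tr T2"
  shows "back_step_code (enc_tsi T1) (enc_tsi T2) Tb m (trans_set_code R1) (trans_opt_code t1)
      (trans_set_code R2) (trans_opt_code t2) \<longleftrightarrow>
    forth_step T2 T1 (\<lambda>q p. A p q) m (R2, t2) (R1, t1)"
proof -
  have "back_step_code (enc_tsi T1) (enc_tsi T2) Tb m (trans_set_code R1) (trans_opt_code t1)
      (trans_set_code R2) (trans_opt_code t2) \<longleftrightarrow>
    (\<forall>r'\<in>R2. step_rel m T2 t2 r' \<longrightarrow> (\<exists>r\<in>R1. lab r = lab r' \<and> step_rel m T1 t1 r \<and>
       table_mem Tb (trans_set_code (Xs T1 (tgt r))) (Suc (enc_trans r))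
         (trans_set_code (Xs T2 (tgt r'))) (Suc (enc_trans r'))))"
    unfolding back_step_code_def
    using finite_subset_Tr[OF fin1 assms(1)] finite_subset_Tr[OF fin2 assms(2)]
    by (simp add: all_less_trans_set_code ex_less_trans_set_code step_code_enc_tsi[OF fin1]
        step_code_enc_tsi[OF fin2] out_code_enc_tsi[OF fin1] out_code_enc_tsi[OF fin2])
  also have "\<dots> \<longleftrightarrow> forth_step T2 T1 (\<lambda>q p. A p q) m (R2, t2) (R1, t1)"
    unfolding forth_step_def fst_conv snd_conv using assms table_mem_successors by blast
  finally show ?thesis .
qed

lemma forth_sub_code_iff:
  assumes "valid_proc T1 (R1, t1)" "valid_proc T2 (R2, t2)"
  shows "forth_sub_code (enc_tsi T1) (enc_tsi T2) Tb (trans_set_code R1) (trans_opt_code t1)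
      (trans_set_code R2) (trans_opt_code t2) \<longleftrightarrow> forth_sub T1 T2 A (R1, t1) (R2, t2)"
proof -
  have "forth_sub_code (enc_tsi T1) (enc_tsi T2) Tb (trans_set_code R1) (trans_opt_code t1)
      (trans_set_code R2) (trans_opt_code t2) \<longleftrightarrow>
    (\<forall>M\<in>procsets T1. sqsub T1 M R1 \<longrightarrow> (\<exists>M'\<in>procsets T2. sqsub T2 M' R2 \<and>
       table_mem Tb (trans_set_code M) (trans_opt_code t1) (trans_set_code M') (trans_opt_code t2)))"
    using assms unfolding forth_sub_code_def valid_proc_def
    by (simp only: fst_conv all_procset_code_iff[OF fin1] ex_procset_code_iff[OF fin2])
  also have "\<dots> \<longleftrightarrow> forth_sub T1 T2 A (R1, t1) (R2, t2)"
    unfolding forth_sub_def using assms table_mem_iff[of "(_, t1)" "(_, t2)"]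
      procsets_subset_Tr[of _ T1] procsets_subset_Tr[of _ T2]
    by (simp add: valid_proc_def proc_codes_def table_mem_def)
  finally show ?thesis .
qed

lemma back_sub_code_iff:
  assumes "valid_proc T1 (R1, t1)" "valid_proc T2 (R2, t2)"
  shows "back_sub_code (enc_tsi T1) (enc_tsi T2) Tb (trans_set_code R1) (trans_opt_code t1)
      (trans_set_code R2) (trans_opt_code t2) \<longleftrightarrow>
    forth_sub T2 T1 (\<lambda>q p. A p q) (R2, t2) (R1, t1)"
proof -
  have "back_sub_code (enc_tsi T1) (enc_tsi T2) Tb (trans_set_code R1) (trans_opt_code t1)
      (trans_set_code R2) (trans_opt_code t2) \<longleftrightarrow>
    (\<forall>M'\<in>procsets T2. sqsub T2 M' R2 \<longrightarrow> (\<exists>M\<in>procsets T1. sqsub T1 M R1 \<and>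
       table_mem Tb (trans_set_code M) (trans_opt_code t1) (trans_set_code M') (trans_opt_code t2)))"
    using assms unfolding back_sub_code_def valid_proc_def
    by (simp only: fst_conv all_procset_code_iff[OF fin2] ex_procset_code_iff[OF fin1])
  also have "\<dots> \<longleftrightarrow> forth_sub T2 T1 (\<lambda>q p. A p q) (R2, t2) (R1, t1)"
    unfolding forth_sub_def using assms table_mem_iff[of "(_, t1)" "(_, t2)"]
      procsets_subset_Tr[of _ T1] procsets_subset_Tr[of _ T2]
    by (simp add: valid_proc_def proc_codes_def table_mem_def)
  finally show ?thesis .
qed

lemma refine_code_iff:
  assumes "valid_proc T1 p" "valid_proc T2 q"
  shows "refine_code (enc_tsi T1) (enc_tsi T2) Tb (trans_set_code (fst p)) (trans_opt_code (snd p))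
      (trans_set_code (fst q)) (trans_opt_code (snd q)) \<longleftrightarrow> A p q \<and> back_and_forth T1 T2 A p q"
proof -
  obtain R1 t1 R2 t2 where pq: "p = (R1, t1)" "q = (R2, t2)" by fastforce
  show ?thesis
    using assms table_mem_iff[OF assms] unfolding pq
    by (simp add: refine_code_def back_and_forth_def valid_proc_def proc_codes_def table_mem_def
        forth_step_code_iff back_step_code_iff forth_sub_code_iff back_sub_code_iff)
qed

end

definition quad_box :: "nat \<Rightarrow> nat \<Rightarrow> (nat \<times> nat \<times> nat \<times> nat) set" where
  "quad_box n1 n2 =
     {..<Suc (trans_code n1)} \<times> {..<Suc (trans_code n1)} \<times> {..<Suc (trans_code n2)} \<times> {..<Suc (trans_code n2)}"

lemma inj_quad_code_tuple: "inj quad_code_tuple"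
  by (rule injI) (auto simp: quad_code_def pair_code_eq)

lemma finite_quad_box: "finite (quad_box n1 n2)"
  by (simp add: quad_box_def)

lemma card_quad_box: "card (quad_box n1 n2) = table_bound n1 n2"
  by (simp only: quad_box_def table_bound_def card_cartesian_product card_lessThan mult.assoc)

lemma sum_cartesian_product4:
  "(\<Sum>a\<in>A. \<Sum>b\<in>B. \<Sum>c\<in>C. \<Sum>d\<in>D. f (a, b, c, d)) = (\<Sum>x\<in>A \<times> B \<times> C \<times> D. f x)"
  by (simp add: sum.cartesian_product split_def)

lemma quad_set_code_eq:
  "quad_set_code n1 n2 P = set_encode (quad_code_tuple ` {(a, b, c, d)\<in>quad_box n1 n2.
     valid_code n1 a b \<and> valid_code n2 c d \<and> P a b c d})"
  (is "_ = set_encode (quad_code_tuple ` ?S)")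
proof -
  let ?Q = "\<lambda>(a, b, c, d). valid_code n1 a b \<and> valid_code n2 c d \<and> P a b c d"
  have "quad_set_code n1 n2 P = (\<Sum>x\<in>quad_box n1 n2. if ?Q x then 2 ^ quad_code_tuple x else 0)"
    unfolding quad_set_code_def quad_box_def sum_cartesian_product4[symmetric]
    by (simp only: prod.case quad_code_tuple.simps)
  also have "\<dots> = (\<Sum>x\<in>{x\<in>quad_box n1 n2. ?Q x}. 2 ^ quad_code_tuple x)"
    by (rule sum.inter_filter[OF finite_quad_box, symmetric])
  also have "{x\<in>quad_box n1 n2. ?Q x} = ?S" by auto
  also have "(\<Sum>x\<in>?S. 2 ^ quad_code_tuple x) = set_encode (quad_code_tuple ` ?S)"
    unfolding set_encode_def
    by (rule sum.reindex[symmetric, unfolded comp_def])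
      (meson inj_quad_code_tuple inj_on_subset subset_UNIV)
  finally show ?thesis .
qed

lemma set_mem_quad_set_code:
  "set_mem (quad_code a b c d) (quad_set_code n1 n2 P) \<longleftrightarrow>
   (a, b, c, d) \<in> quad_box n1 n2 \<and> valid_code n1 a b \<and> valid_code n2 c d \<and> P a b c d"
proof -
  let ?S = "{(a, b, c, d)\<in>quad_box n1 n2. valid_code n1 a b \<and> valid_code n2 c d \<and> P a b c d}"
  have "finite ?S" using finite_quad_box by (rule finite_subset[rotated]) auto
  then have "set_mem (quad_code_tuple (a, b, c, d)) (quad_set_code n1 n2 P) \<longleftrightarrow> (a, b, c, d) \<in> ?S"
    by (simp only: quad_set_code_eq set_mem_iff finite_imageI set_encode_inverse
        inj_image_mem_iff[OF inj_quad_code_tuple])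
  then show ?thesis by simp
qed

lemma table_0: "table n1 n2 0 = quad_set_code n1 n2 (\<lambda>_ _ _ _. True)"
  and table_Suc: "table n1 n2 (Suc k) = table_refine n1 n2 (table n1 n2 k)"
  by (simp_all add: table_def)

lemma set_mem_table_SucD:
  "set_mem (quad_code a b c d) (table n1 n2 (Suc k)) \<Longrightarrow> set_mem (quad_code a b c d) (table n1 n2 k)"
  by (simp add: table_Suc table_refine_def set_mem_quad_set_code refine_code_def table_mem_def)

lemma antimono_chain_stabilises:
  fixes S :: "nat \<Rightarrow> 'a set"
  assumes "finite D" "\<And>k. S k \<subseteq> D" "\<And>k. S (Suc k) \<subseteq> S k"
  shows "\<exists>j\<le>card D. S (Suc j) = S j"
proof (rule ccontr)
  assume "\<not> ?thesis"
  then have shrinks: "\<And>j. j \<le> card D \<Longrightarrow> S (Suc j) \<subset> S j" using assms(3) by blast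
  have "card (S j) + j \<le> card D" if "j \<le> Suc (card D)" for j
    using that
  proof (induction j)
    case 0
    then show ?case using card_mono[OF assms(1,2)] by simp
  next
    case (Suc j)
    have "card (S (Suc j)) < card (S j)"
      using psubset_card_mono[OF finite_subset[OF assms(2,1)] shrinks[of j]] Suc.prems by simp
    with Suc show ?case by simp
  qed
  from this[of "Suc (card D)"] show False by simp
qed

lemma table_stabilises: "\<exists>j\<le>table_bound n1 n2. \<forall>k\<ge>j. table n1 n2 k = table n1 n2 j"
proof -
  let ?S = "\<lambda>k. {x\<in>quad_box n1 n2. set_mem (quad_code_tuple x) (table n1 n2 k)}"
  have table_eq: "table n1 n2 k = set_encode (quad_code_tuple ` ?S k)" for k
  proof -
    obtain P where P: "table n1 n2 k = quad_set_code n1 n2 P"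
      by (cases k) (auto simp: table_0 table_Suc table_refine_def)
    then have "?S k = {(a, b, c, d)\<in>quad_box n1 n2. valid_code n1 a b \<and> valid_code n2 c d \<and> P a b c d}"
      by (force simp: set_mem_quad_set_code)
    with P show ?thesis by (simp add: quad_set_code_eq)
  qed
  have "\<And>k. ?S (Suc k) \<subseteq> ?S k" using set_mem_table_SucD by fastforce
  then obtain j where j: "j \<le> table_bound n1 n2" "?S (Suc j) = ?S j"
    using antimono_chain_stabilises[of "quad_box n1 n2" ?S] finite_quad_box card_quad_box by auto
  have "table n1 n2 (Suc j) = table n1 n2 j"
    using table_eq[of "Suc j"] table_eq[of j] j(2) by simp
  then have "table n1 n2 (j + i) = table n1 n2 j" for i
    by (induction i) (simp_all add: table_Suc)
  then have "\<forall>k\<ge>j. table n1 n2 k = table n1 n2 j"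
    by (auto simp: le_iff_add)
  with j(1) show ?thesis by blast
qed

lemma set_mem_table_bound_iff:
  "set_mem (quad_code a b c d) (table n1 n2 (table_bound n1 n2)) \<longleftrightarrow>
   (\<forall>k. set_mem (quad_code a b c d) (table n1 n2 k))"
proof
  assume mem: "set_mem (quad_code a b c d) (table n1 n2 (table_bound n1 n2))"
  obtain j where j: "j \<le> table_bound n1 n2" "\<forall>k\<ge>j. table n1 n2 k = table n1 n2 j"
    using table_stabilises by blast
  show "\<forall>k. set_mem (quad_code a b c d) (table n1 n2 k)"
  proof
    fix k
    show "set_mem (quad_code a b c d) (table n1 n2 k)"
    proof (cases "k \<le> table_bound n1 n2")
      case True
      then show ?thesis using mem by (induction rule: inc_induct) (auto dest: set_mem_table_SucD)
    next
      case False
      then have "table n1 n2 k = table n1 n2 (table_bound n1 n2)"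
        using j(1) j(2)[rule_format, of k] j(2)[rule_format, of "table_bound n1 n2"] by simp
      with mem show ?thesis by simp
    qed
  qed
qed blast

lemma valid_code_proc:
  assumes "finite_tsi T" "valid_proc T p"
  shows "trans_set_code (fst p) < Suc (trans_code (enc_tsi T))"
    and "trans_opt_code (snd p) < Suc (trans_code (enc_tsi T))"
    and "valid_code (enc_tsi T) (trans_set_code (fst p)) (trans_opt_code (snd p))"
proof -
  have fin: "finite (Tr T)" "finite (fst p)"
    using assms finite_Tr finite_subset_Tr by (auto simp: valid_proc_def)
  show "trans_set_code (fst p) < Suc (trans_code (enc_tsi T))"
    using trans_set_code_mono[OF fin(1)] assms
    by (simp add: valid_proc_def trans_code_enc_tsi le_imp_less_Suc)
  show "trans_opt_code (snd p) < Suc (trans_code (enc_tsi T))"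
    using assms fin(1)
    by (cases "snd p") (auto simp: valid_proc_def trans_opt_code_def trans_code_enc_tsi
        intro: enc_trans_less_trans_set_code)
  show "valid_code (enc_tsi T) (trans_set_code (fst p)) (trans_opt_code (snd p))"
    using assms fin by (cases "snd p")
      (auto simp: valid_code_def valid_proc_def trans_opt_code_def trans_code_enc_tsi
        subset_code_trans_set_code)
qed

lemma set_mem_table_iff_agree:
  assumes fin1: "finite_tsi T1" and fin2: "finite_tsi T2"
    and "valid_proc T1 p" "valid_proc T2 q"
  shows "set_mem (quad_code_tuple (proc_codes p q)) (table (enc_tsi T1) (enc_tsi T2) k) \<longleftrightarrow>
    agree T1 T2 k p q"
  using assms(3,4)
proof (induction k arbitrary: p q)
  case 0
  then show ?case
    using valid_code_proc[OF fin1 0(1)] valid_code_proc[OF fin2 0(2)]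
    by (simp add: proc_codes_def table_0 set_mem_quad_set_code quad_box_def agree_0)
next
  case (Suc k)
  have "set_mem (quad_code_tuple (proc_codes p q)) (table (enc_tsi T1) (enc_tsi T2) (Suc k)) \<longleftrightarrow>
      refine_code (enc_tsi T1) (enc_tsi T2) (table (enc_tsi T1) (enc_tsi T2) k)
        (trans_set_code (fst p)) (trans_opt_code (snd p))
        (trans_set_code (fst q)) (trans_opt_code (snd q))"
    using valid_code_proc[OF fin1 Suc.prems(1)] valid_code_proc[OF fin2 Suc.prems(2)]
    by (simp add: proc_codes_def table_Suc table_refine_def set_mem_quad_set_code quad_box_def)
  also have "\<dots> \<longleftrightarrow> agree T1 T2 k p q \<and> back_and_forth T1 T2 (agree T1 T2 k) p q"
    by (rule refine_code_iff[OF fin1 fin2 Suc.IH Suc.prems])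
  also have "\<dots> \<longleftrightarrow> agree T1 T2 (Suc k) p q"
    using Suc.prems by (simp add: agree_Suc_iff[OF fin1 fin2] valid_proc_def)
  finally show ?case .
qed

lemma decide_tfl_enc_tsi:
  assumes "finite_tsi T1" "finite_tsi T2"
  shows "decide_tfl (enc_tsi T1) (enc_tsi T2) = (if tfl_equiv T1 T2 then 1 else 0)"
proof -
  let ?p = "init_proc T1" and ?q = "init_proc T2"
  have valid: "valid_proc T1 ?p" "valid_proc T2 ?q"
    by (auto simp: valid_proc_def init_proc_def Xs_def)
  have "decide_tfl (enc_tsi T1) (enc_tsi T2) =
      (if \<forall>k. set_mem (quad_code_tuple (proc_codes ?p ?q)) (table (enc_tsi T1) (enc_tsi T2) k)
       then 1 else 0)"
    using assms
    by (simp add: decide_tfl_def table_mem_def set_mem_table_bound_iff proc_codes_def init_proc_def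
        trans_opt_code_def out_code_enc_tsi init_code_enc_tsi)
  also have "\<dots> = (if tfl_equiv T1 T2 then 1 else 0)"
    by (simp add: set_mem_table_iff_agree[OF assms valid] tfl_equiv_iff_agree)
  finally show ?thesis .
qed

theorem corollary6:
  shows "\<exists>f. \<forall>T1 T2. finite_tsi T1 \<longrightarrow> finite_tsi T2 \<longrightarrow>
           eval f [enc_tsi T1, enc_tsi T2] (if tfl_equiv T1 T2 then 1 else 0)"
proof -
  obtain f where f: "\<And>xs. length xs = 2 \<Longrightarrow> eval f xs (decide_tfl (xs ! 0) (xs ! 1))"
    using decide_tfl_computable unfolding computable_def by blast
  show ?thesis
  proof (intro exI allI impI)
    fix T1 T2 assume "finite_tsi T1" "finite_tsi T2"
    then show "eval f [enc_tsi T1, enc_tsi T2] (if tfl_equiv T1 T2 then 1 else 0)"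
      using f[of "[enc_tsi T1, enc_tsi T2]"] by (simp add: decide_tfl_enc_tsi)
  qed
qed

end
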